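(* Assume the Setting and consider Algorithm 1 (with any $\beta\in(0,\infty]$) using a sequence of noisy data $y^{\delta_k}$ with $\|y^{\delta_k}-y\|\le\delta_k$, $0<\delta_k\to0$, where $\tau>1$ and $\mu_0>0$ satisfy $1-\frac{1+\eta}{\tau}-\eta-\frac{\mu_0}{4\sigma}>0$. Let $n_k:=n_{\delta_k}$ be the stopping index. Then there is a subsequence $(k_l)$ such that $x_{n_{k_l}}^{\delta_{k_l}}\rightharpoonup x^*$ weakly as $l\to\infty$ for some solution $x^*$ of $F(x)=y$ with $x^*\in B_{2\rho}(x_0)$. If in addition $\mathcal R(x)=\frac12\|x\|^2$ and $\mathrm{Ker}(L(x^\dagger))\subset\mathrm{Ker}(L(x))$ for all $x\in B_{2\rho}(x_0)$, then $x_{n_k}^{\delta_k}\rightharpoonup x^\dagger$ as $k\to\infty$, where $x^\dagger$ is the unique solution of $F(x)=y$ minimizing $\|x-x_0\|$.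
   Context: Setting. Let $X,Y$ be real Hilbert spaces. Let $\mathcal R:X\to(-\infty,\infty]$ be proper, lower semicontinuous and strongly convex with constant $\sigma>0$, i.e. $\mathcal R(t\bar x+(1-t)x)+\sigma t(1-t)\|\bar x-x\|^2\le t\mathcal R(\bar x)+(1-t)\mathcal R(x)$ for all $\bar x,x\in\mathrm{dom}(\mathcal R)$ and $t\in[0,1]$. For $\xi\in\partial\mathcal R(x)$ (subdifferential) the Bregman distance is $D_{\mathcal R}^{\xi}(z,x)=\mathcal R(z)-\mathcal R(x)-\langle\xi,z-x\rangle$. The convex conjugate $\mathcal R^*$ is differentiable with $\|\nabla\mathcal R^*(\bar\xi)-\nabla\mathcal R^*(\xi)\|\le\|\bar\xi-\xi\|/(2\sigma)$, and $\nabla\mathcal R^*(\xi)=\arg\min_{x\in X}\{\mathcal R(x)-\langle\xi,x\rangle\}$ (unique minimizer), with $\xi\in\partial\mathcal R(\nabla\mathcal R^*(\xi))$. Let $F:\mathrm{dom}(F)\subset X\to Y$ and $y\in Y$. Assume: (b) there are $\rho>0$, $x_0\in X$, $\xi_0\in\partial\mathcal R(x_0)$ with $B_{2\rho}(x_0):=\{x:\|x-x_0\|\le 2\rho\}\subset\mathrm{dom}(F)$, and $F(x)=y$ has a solution $\bar x$ with $D_{\mathcal R}^{\xi_0}(\bar x,x_0)\le\sigma\rho^2$; (c) $F$ is weakly closed: if $x_n\in\mathrm{dom}(F)$, $x_n\rightharpoonup x$ and $F(x_n)\to v$, then $x\in\mathrm{dom}(F)$ and $F(x)=v$; (d) there are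 bounded linear operators $L(x):X\to Y$, $x\in B_{2\rho}(x_0)$, with $x\mapsto L(x)$ continuous on $B_{2\rho}(x_0)$, a constant $\eta\in[0,1)$ with $\|F(x)-F(\bar x)-L(\bar x)(x-\bar x)\|\le\eta\|F(x)-F(\bar x)\|$ for all $x,\bar x\in B_{2\rho}(x_0)$, and a constant $L>0$ with $\|L(x)\|\le L$ on $B_{2\rho}(x_0)$. Under these assumptions $F(x)=y$ has a unique solution $x^\dagger\in\mathrm{dom}(F)$ minimizing $D_{\mathcal R}^{\xi_0}(x,x_0)$ over all solutions; it satisfies $\|x^\dagger-x_0\|\le\rho$. Algorithm 1 (noisy data $y^\delta$ with $\|y^\delta-y\|\le\delta$, $\delta>0$). Parameters: $\tau>1$, $\beta\in(0,\infty]$, $\mu_0>0$, $\mu_1>0$, and a fixed choice of one of two step-size rules: (constant) $\alpha_n^\delta=\mu_0/L^2$, or (adaptive) $\alpha_n^\delta=\min\{\mu_0\|r_n^\delta\|^2/\|g_n^\delta\|^2,\mu_1\}$ (with $\mu_0\|r_n^\delta\|^2/\|g_n^\delta\|^2:=+\infty$ if $g_n^\delta=0$). Set $\xi_{-1}^\delta=\xi_0^\delta=\xi_0$, $x_0^\delta=x_0=\nabla\mathcal R^*(\xi_0)$. For $n\ge0$: (i) $r_n^\delta:=F(x_n^\delta)-y^\delta$; if $\|r_n^\delta\|\le\tau\delta$, stop and output $x_n^\delta$ (the stopping index is denoted $n_\delta$; it is finite under the hypotheses of the claim). (ii) $g_n^\delta:=L(x_n^\delta)^*r_n^\delta$ and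 $\alpha_n^\delta$ by the chosen rule. (iii) $m_n^\delta:=\xi_n^\delta-\xi_{n-1}^\delta$; $\tilde\gamma_0^\delta:=0$ and for $n\ge1$, $\tilde\gamma_n^\delta:=\langle m_n^\delta,x_n^\delta-x_{n-1}^\delta\rangle-(1-\eta)\alpha_{n-1}^\delta\|r_{n-1}^\delta\|^2+(1+\eta)\alpha_{n-1}^\delta\delta\|r_{n-1}^\delta\|+\beta_{n-1}^\delta\tilde\gamma_{n-1}^\delta$. (iv) $\beta_n^\delta:=\min\{\max\{0,(\alpha_n^\delta\langle g_n^\delta,m_n^\delta\rangle-2\sigma\tilde\gamma_n^\delta)/\|m_n^\delta\|^2\},\beta\}$ if $m_n^\delta\ne0$, and $\beta_n^\delta:=0$ if $m_n^\delta=0$. (v) $\xi_{n+1}^\delta:=\xi_n^\delta-\alpha_n^\delta g_n^\delta+\beta_n^\delta m_n^\delta$, $x_{n+1}^\delta:=\nabla\mathcal R^*(\xi_{n+1}^\delta)$. *)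

theory Defs
  imports "HOL-Analysis.Analysis" "HOL-Library.Extended_Real"
begin

definition weakly_conv :: "(nat \<Rightarrow> 'a::real_inner) \<Rightarrow> 'a \<Rightarrow> bool" where
  "weakly_conv xs x \<longleftrightarrow> (\<forall>v. (\<lambda>n. inner (xs n) v) \<longlonglongrightarrow> inner x v)"

definition proper_fun :: "('a \<Rightarrow> ereal) \<Rightarrow> bool" where
  "proper_fun R \<longleftrightarrow> (\<forall>x. R x \<noteq> -\<infinity>) \<and> (\<exists>x. R x \<noteq> \<infinity>)"

definition lsc_fun :: "('a::topological_space \<Rightarrow> ereal) \<Rightarrow> bool" where
  "lsc_fun R \<longleftrightarrow> (\<forall>x xs. xs \<longlonglongrightarrow> x \<longrightarrow> R x \<le> liminf (\<lambda>n. R (xs n)))"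

definition strongly_convex :: "('a::real_normed_vector \<Rightarrow> ereal) \<Rightarrow> real \<Rightarrow> bool" where
  "strongly_convex R \<sigma> \<longleftrightarrow>
     (\<forall>xb x t. R xb \<noteq> \<infinity> \<longrightarrow> R x \<noteq> \<infinity> \<longrightarrow> 0 \<le> t \<longrightarrow> t \<le> 1 \<longrightarrow>
        R (t *\<^sub>R xb + (1 - t) *\<^sub>R x) + ereal (\<sigma> * t * (1 - t) * (norm (xb - x))\<^sup>2)
          \<le> ereal t * R xb + ereal (1 - t) * R x)"

definition subdiff :: "('a::real_inner \<Rightarrow> ereal) \<Rightarrow> 'a \<Rightarrow> 'a set" where
  "subdiff R x = {\<xi>. R x \<noteq> \<infinity> \<and> (\<forall>z. R x + ereal (inner \<xi> (z - x)) \<le> R z)}"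

definition bregman :: "('a::real_inner \<Rightarrow> ereal) \<Rightarrow> 'a \<Rightarrow> 'a \<Rightarrow> 'a \<Rightarrow> ereal" where
  "bregman R \<xi> z x = R z - R x - ereal (inner \<xi> (z - x))"

text \<open>Gradient of the convex conjugate: the (unique) minimiser of R x - <xi,x>.\<close>
definition grad_conj :: "('a::real_inner \<Rightarrow> ereal) \<Rightarrow> 'a \<Rightarrow> 'a" where
  "grad_conj R \<xi> = (THE x. \<forall>z. R x - ereal (inner \<xi> x) \<le> R z - ereal (inner \<xi> z))"

definition step_alpha :: "bool \<Rightarrow> real \<Rightarrow> real \<Rightarrow> real \<Rightarrow> 'b::real_normed_vector \<Rightarrow> 'a::real_normed_vector \<Rightarrow> real" where
  "step_alpha adaptive \<mu>0 \<mu>1 Lc r g =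
     (if adaptive then (if g = 0 then \<mu>1 else min (\<mu>0 * (norm r)\<^sup>2 / (norm g)\<^sup>2) \<mu>1)
      else \<mu>0 / Lc\<^sup>2)"

definition step_beta :: "ereal \<Rightarrow> real \<Rightarrow> real \<Rightarrow> real \<Rightarrow> 'a::real_inner \<Rightarrow> 'a \<Rightarrow> real" where
  "step_beta \<beta> \<sigma> \<alpha> \<gamma> g m =
     (if m = 0 then 0 else
        (let t = (\<alpha> * inner g m - 2 * \<sigma> * \<gamma>) / (norm m)\<^sup>2 in
           if \<beta> = \<infinity> then max 0 t else min (max 0 t) (real_of_ereal \<beta>)))"

text \<open>State of Algorithm 1 at step n: (xi_n, xi_{n-1}, gamma~_n).\<close>
primrec alg1 :: "('a::real_inner \<Rightarrow> ereal) \<Rightarrow> ('a \<Rightarrow> 'b::real_inner) \<Rightarrow> ('a \<Rightarrow> ('a \<Rightarrow>\<^sub>L 'b))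
   \<Rightarrow> real \<Rightarrow> real \<Rightarrow> real \<Rightarrow> bool \<Rightarrow> real \<Rightarrow> real \<Rightarrow> ereal
   \<Rightarrow> 'a \<Rightarrow> 'b \<Rightarrow> real \<Rightarrow> nat \<Rightarrow> 'a \<times> 'a \<times> real" where
  "alg1 R F Lop \<sigma> \<eta> Lc adaptive \<mu>0 \<mu>1 \<beta> \<xi>0 yd \<delta> 0 = (\<xi>0, \<xi>0, 0)"
| "alg1 R F Lop \<sigma> \<eta> Lc adaptive \<mu>0 \<mu>1 \<beta> \<xi>0 yd \<delta> (Suc n) =
    (case alg1 R F Lop \<sigma> \<eta> Lc adaptive \<mu>0 \<mu>1 \<beta> \<xi>0 yd \<delta> n of (\<xi>, \<xi>p, \<gamma>) \<Rightarrow>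
      (let x = grad_conj R \<xi>;
           r = F x - yd;
           g = adjoint (blinfun_apply (Lop x)) r;
           \<alpha> = step_alpha adaptive \<mu>0 \<mu>1 Lc r g;
           m = \<xi> - \<xi>p;
           b = step_beta \<beta> \<sigma> \<alpha> \<gamma> g m;
           \<xi>n = \<xi> - \<alpha> *\<^sub>R g + b *\<^sub>R m;
           xn = grad_conj R \<xi>n
       in (\<xi>n, \<xi>,
           inner (\<xi>n - \<xi>) (xn - x) - (1 - \<eta>) * \<alpha> * (norm r)\<^sup>2
             + (1 + \<eta>) * \<alpha> * \<delta> * norm r + b * \<gamma>)))"

definition alg1_x where
  "alg1_x R F Lop \<sigma> \<eta> Lc adaptive \<mu>0 \<mu>1 \<beta> \<xi>0 yd \<delta> n =
     grad_conj R (fst (alg1 R F Lop \<sigma> \<eta> Lc adaptive \<mu>0 \<mu>1 \<beta> \<xi>0 yd \<delta> n))"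

definition alg1_stop where
  "alg1_stop R F Lop \<sigma> \<eta> Lc adaptive \<mu>0 \<mu>1 \<beta> \<xi>0 yd \<delta> \<tau> =
     (LEAST n. norm (F (alg1_x R F Lop \<sigma> \<eta> Lc adaptive \<mu>0 \<mu>1 \<beta> \<xi>0 yd \<delta> n) - yd) \<le> \<tau> * \<delta>)"

end

theory Submission
  imports Defs "HOL-Library.Diagonal_Subsequence"
begin

text \<open>With \<open>xb\<close> a solution close to \<open>x0\<close>, the Bregman distance \<open>D\<^sup>\<xi>\<^sup>\<^sub>n(xb, x\<^sub>n)\<close> decreases along
  Algorithm 1 by at least \<open>c \<alpha>\<^sub>n \<parallel>r\<^sub>n\<parallel>\<^sup>2\<close> per step as long as the discrepancy principle has not
  stopped: the three-point identity splits the change into a Bregman term, bounded by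
  \<open>\<parallel>\<xi>\<^sub>n\<^sub>+\<^sub>1 - \<xi>\<^sub>n\<parallel>\<^sup>2/(4\<sigma>)\<close>, and \<open>\<langle>\<xi>\<^sub>n\<^sub>+\<^sub>1 - \<xi>\<^sub>n, x\<^sub>n - xb\<rangle>\<close>; the tangential cone condition bounds the
  gradient part, while the choice of \<open>\<beta>\<^sub>n\<close> and the invariant \<open>\<langle>m\<^sub>n, x\<^sub>n - xb\<rangle> \<le> \<gamma>\<^sub>n\<close> keep the
  momentum part harmless. Hence the iterates stay in \<open>B\<^sub>\<rho>(xb)\<close>, the stopping index is finite
  and the stopped iterates are bounded uniformly in \<open>\<delta>\<close>; as \<open>\<parallel>F(x\<^sub>n\<^sub>\<delta>) - y\<parallel> \<le> (\<tau> + 1)\<delta>\<close>, weak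
  sequential compactness and the weak closedness of \<open>F\<close> give a weakly convergent subsequence
  with a solution as limit.

  For \<open>R = \<parallel>\<cdot>\<parallel>\<^sup>2/2\<close> the increments \<open>x\<^sub>n - x0\<close> stay orthogonal to \<open>N(L(x\<^sup>\<dagger>))\<close>, and so does
  \<open>x\<^sup>\<dagger> - x0\<close> by minimality; since every weak cluster point \<open>p\<close> has \<open>p - x\<^sup>\<dagger> \<in> N(L(x\<^sup>\<dagger>))\<close>,
  it equals \<open>x\<^sup>\<dagger>\<close>, and the whole sequence converges weakly.\<close>

section \<open>Hilbert space preliminaries\<close>

lemma power2_norm_add:
  fixes a b :: "'a::real_inner"
  shows "(norm (a + b))\<^sup>2 = (norm a)\<^sup>2 + 2 * inner a b + (norm b)\<^sup>2"
  by (simp add: power2_norm_eq_inner inner_add_left inner_add_right inner_commute)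

lemma power2_norm_diff:
  fixes a b :: "'a::real_inner"
  shows "(norm (a - b))\<^sup>2 = (norm a)\<^sup>2 - 2 * inner a b + (norm b)\<^sup>2"
  by (simp add: power2_norm_eq_inner inner_diff_left inner_diff_right inner_commute)

lemma parallelogram_law:
  fixes a b :: "'a::real_inner"
  shows "(norm (a + b))\<^sup>2 + (norm (a - b))\<^sup>2 = 2 * (norm a)\<^sup>2 + 2 * (norm b)\<^sup>2"
  by (simp add: power2_norm_add power2_norm_diff)

lemma inner_plus_quadratic_lower_bound:
  fixes w u :: "'a::real_inner"
  assumes "\<sigma> > 0"
  shows "- (norm w)\<^sup>2 / (4 * \<sigma>) \<le> inner w u + \<sigma> * (norm u)\<^sup>2"
proof -
  have "0 \<le> (norm (w + (2 * \<sigma>) *\<^sub>R u))\<^sup>2" by simp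
  also have "\<dots> = (norm w)\<^sup>2 + 4 * \<sigma> * (inner w u + \<sigma> * (norm u)\<^sup>2)"
    unfolding power2_norm_add by (simp add: power_mult_distrib algebra_simps power2_eq_square)
  finally show ?thesis using assms by (simp add: field_simps)
qed

lemma quadratic_nonneg_imp_linear_coeff_0:
  fixes a b :: real
  assumes nonneg: "\<And>t. \<bar>t\<bar> \<le> 1 \<Longrightarrow> 0 \<le> a * t + b * t\<^sup>2" and "0 \<le> b"
  shows "a = 0"
proof (rule ccontr)
  assume "a \<noteq> 0"
  define s where "s = \<bar>a\<bar> + b"
  have s: "s > 0" using \<open>a \<noteq> 0\<close> \<open>0 \<le> b\<close> by (simp add: s_def)
  have "\<bar>- a / s\<bar> \<le> 1" using s \<open>0 \<le> b\<close> by (simp add: s_def abs_divide)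
  then have "0 \<le> a * (- a / s) + b * (- a / s)\<^sup>2" by (rule nonneg)
  also have "\<dots> = a\<^sup>2 * (b - s) / s\<^sup>2"
    using s by (simp add: field_simps power2_eq_square)
  also have "\<dots> = - (a\<^sup>2 * \<bar>a\<bar>) / s\<^sup>2" by (simp add: s_def)
  also have "\<dots> < 0" using \<open>a \<noteq> 0\<close> s by (simp add: divide_neg_pos)
  finally show False by simp
qed

lemma add_le_if_add_shrunk_le:
  fixes a b c :: real
  assumes "\<And>t. 0 < t \<Longrightarrow> t \<le> 1 \<Longrightarrow> a + (1 - t) * c \<le> b"
  shows "a + c \<le> b"
proof (rule tendsto_le[OF trivial_limit_at_right_real])
  show "((\<lambda>t. a + (1 - t) * c) \<longlongrightarrow> a + c) (at_right 0)"
    by (auto intro!: tendsto_eq_intros)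
  have "\<forall>\<^sub>F t in at_right 0. t \<in> {0<..<1::real}" by (rule eventually_at_right_real) simp
  then show "\<forall>\<^sub>F t in at_right 0. a + (1 - t) * c \<le> b" by eventually_elim (simp add: assms)
qed simp

lemma Cauchy_if_sq_dist_le_harmonic:
  fixes z :: "nat \<Rightarrow> 'a::real_normed_vector"
  assumes c: "c > 0" and le: "\<And>i j. c * (norm (z i - z j))\<^sup>2 \<le> 1 / Suc i + 1 / Suc j"
  shows "Cauchy z"
proof (rule CauchyI)
  fix e :: real assume e: "0 < e"
  obtain M :: nat where "2 / (c * e\<^sup>2) < M" using reals_Archimedean2 by blast
  then have M: "2 / (c * e\<^sup>2) < Suc M" by simp
  have M': "2 / Suc M < c * e\<^sup>2"
    using M c e by (simp add: field_simps)
  show "\<exists>M. \<forall>i\<ge>M. \<forall>j\<ge>M. norm (z i - z j) < e"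
  proof (intro exI allI impI)
    fix i j assume "M \<le> i" "M \<le> j"
    then have "1 / real (Suc i) \<le> 1 / Suc M" "1 / real (Suc j) \<le> 1 / Suc M"
      by (simp_all add: frac_le)
    then have "c * (norm (z i - z j))\<^sup>2 < c * e\<^sup>2" using le[of i j] M' by linarith
    then have "(norm (z i - z j))\<^sup>2 < e\<^sup>2" using c by simp
    then show "norm (z i - z j) < e" using e by (simp add: power_less_imp_less_base)
  qed
qed

text \<open>By the midpoint inequality, minimising sequences are Cauchy.\<close>

lemma uniformly_midconvex_attains_min:
  fixes \<phi> :: "'a::{real_normed_vector,complete_space} \<Rightarrow> real"
  assumes "z0 \<in> C"
    and mid: "\<And>a b. a \<in> C \<Longrightarrow> b \<in> C \<Longrightarrow> (1/2) *\<^sub>R (a + b) \<in> C"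
    and lb: "\<And>z. z \<in> C \<Longrightarrow> B \<le> \<phi> z"
    and c: "c > 0"
    and convex: "\<And>a b. a \<in> C \<Longrightarrow> b \<in> C \<Longrightarrow>
                   2 * \<phi> ((1/2) *\<^sub>R (a + b)) + 2 * c * (norm (a - b))\<^sup>2 \<le> \<phi> a + \<phi> b"
    and lsc: "\<And>z l v. (\<forall>n. z n \<in> C) \<Longrightarrow> z \<longlonglongrightarrow> l \<Longrightarrow> (\<lambda>n. \<phi> (z n)) \<longlonglongrightarrow> v \<Longrightarrow>
                l \<in> C \<and> \<phi> l \<le> v"
  shows "\<exists>z\<in>C. \<forall>w\<in>C. \<phi> z \<le> \<phi> w"
proof -
  define m where "m = Inf (\<phi> ` C)"
  have m_le: "m \<le> \<phi> w" if "w \<in> C" for w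
    unfolding m_def using that lb by (meson bdd_belowI2 cInf_lower imageI)
  have "\<exists>z. z \<in> C \<and> \<phi> z < m + 1 / Suc n" for n
    using cInf_lessD[of "\<phi> ` C" "m + 1 / Suc n"] \<open>z0 \<in> C\<close> by (force simp: m_def)
  then obtain z where zC: "\<And>n. z n \<in> C" and z_lt: "\<And>n. \<phi> (z n) < m + 1 / Suc n"
    by metis
  have "2 * c * (norm (z i - z j))\<^sup>2 \<le> 1 / Suc i + 1 / Suc j" for i j
    using convex[OF zC zC, of i j] m_le[OF mid[OF zC[of i] zC[of j]]] z_lt[of i] z_lt[of j] by linarith
  then have "Cauchy z" using c by (intro Cauchy_if_sq_dist_le_harmonic[of "2 * c"]) auto
  then obtain l where zl: "z \<longlonglongrightarrow> l" using Cauchy_convergent_iff convergent_def by blast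
  have "(\<lambda>n. \<phi> (z n)) \<longlonglongrightarrow> m"
  proof (rule tendsto_sandwich[of "\<lambda>n. m" _ _ "\<lambda>n. m + 1 / Suc n"])
    show "\<forall>\<^sub>F n in sequentially. m \<le> \<phi> (z n)" using m_le zC by simp
    show "\<forall>\<^sub>F n in sequentially. \<phi> (z n) \<le> m + 1 / real (Suc n)"
      using z_lt by (intro always_eventually allI less_imp_le)
    show "(\<lambda>n. m + 1 / real (Suc n)) \<longlonglongrightarrow> m"
      using tendsto_add[OF tendsto_const LIMSEQ_inverse_real_of_nat, of m]
      by (simp add: inverse_eq_divide)
  qed simp
  then have "l \<in> C" "\<phi> l \<le> m" using lsc[OF _ zl] zC by auto
  then show ?thesis using m_le by force
qed

lemma tendsto_bounded_additive_on:
  fixes lf :: "'a::real_normed_vector \<Rightarrow> real"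
  assumes "subspace S"
    and add: "\<And>a b. a \<in> S \<Longrightarrow> b \<in> S \<Longrightarrow> lf (a + b) = lf a + lf b"
    and bound: "\<And>w. w \<in> S \<Longrightarrow> \<bar>lf w\<bar> \<le> B * norm w"
    and zS: "\<And>n. z n \<in> S" and "l \<in> S" and zl: "z \<longlonglongrightarrow> l"
  shows "(\<lambda>n. lf (z n)) \<longlonglongrightarrow> lf l"
proof -
  have "(\<lambda>n. lf (z n) - lf l) \<longlonglongrightarrow> 0"
  proof (rule Lim_null_comparison)
    have "lf (z n) - lf l = lf (z n - l)" for n
      using add[of "z n - l" l] zS \<open>l \<in> S\<close> \<open>subspace S\<close> by (simp add: subspace_diff)
    then show "\<forall>\<^sub>F n in sequentially. norm (lf (z n) - lf l) \<le> B * norm (z n - l)"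
      using bound zS \<open>l \<in> S\<close> \<open>subspace S\<close> by (simp add: subspace_diff)
    show "(\<lambda>n. B * norm (z n - l)) \<longlonglongrightarrow> 0"
      using zl by (intro tendsto_mult_right_zero tendsto_norm_zero) (simp add: LIM_zero)
  qed
  then show ?thesis by (simp add: LIM_zero_iff)
qed

text \<open>The representer minimises \<open>\<parallel>z\<parallel>\<^sup>2 - 2 lf z\<close> over \<open>S\<close>.\<close>

lemma riesz_representation_subspace:
  fixes S :: "'a::{real_inner,complete_space} set" and lf :: "'a \<Rightarrow> real"
  assumes sub: "subspace S" and "closed S"
    and add: "\<And>a b. a \<in> S \<Longrightarrow> b \<in> S \<Longrightarrow> lf (a + b) = lf a + lf b"
    and scale: "\<And>c a. a \<in> S \<Longrightarrow> lf (c *\<^sub>R a) = c * lf a"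
    and bound: "\<And>w. w \<in> S \<Longrightarrow> \<bar>lf w\<bar> \<le> B * norm w"
  shows "\<exists>p\<in>S. \<forall>w\<in>S. inner p w = lf w"
proof -
  define \<psi> where "\<psi> z = (norm z)\<^sup>2 - 2 * lf z" for z
  have "\<exists>p\<in>S. \<forall>w\<in>S. \<psi> p \<le> \<psi> w"
  proof (rule uniformly_midconvex_attains_min[of 0 S "- (B\<^sup>2)" \<psi> "1/4"])
    show "0 \<in> S" using sub by (rule subspace_0)
    show "(1/2) *\<^sub>R (a + b) \<in> S" if "a \<in> S" "b \<in> S" for a b
      using sub that by (simp add: subspace_add subspace_mul)
    show "- (B\<^sup>2) \<le> \<psi> z" if "z \<in> S" for z
    proof -
      have "lf z \<le> \<bar>B\<bar> * norm z"
        using bound[OF that] by (smt (verit) abs_ge_self mult_right_mono norm_ge_zero)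
      moreover have "2 * (\<bar>B\<bar> * norm z) \<le> (norm z)\<^sup>2 + B\<^sup>2"
        using zero_le_power2[of "norm z - \<bar>B\<bar>"] by (simp add: power2_diff power2_abs mult_ac)
      ultimately show ?thesis unfolding \<psi>_def by linarith
    qed
    show "2 * \<psi> ((1/2) *\<^sub>R (a + b)) + 2 * (1/4) * (norm (a - b))\<^sup>2 \<le> \<psi> a + \<psi> b"
      if "a \<in> S" "b \<in> S" for a b
    proof -
      have "lf ((1/2) *\<^sub>R (a + b)) = (lf a + lf b) / 2"
        using scale add that sub by (simp add: subspace_add)
      moreover have "(norm ((1/2) *\<^sub>R (a + b)))\<^sup>2 = (norm (a + b))\<^sup>2 / 4"
        by (simp add: power2_eq_square)
      ultimately show ?thesis unfolding \<psi>_def using parallelogram_law[of a b] by (simp add: field_simps)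
    qed
    show "l \<in> S \<and> \<psi> l \<le> v"
      if zS: "\<forall>n. z n \<in> S" and zl: "z \<longlonglongrightarrow> l" and "(\<lambda>n. \<psi> (z n)) \<longlonglongrightarrow> v" for z l v
    proof -
      have "l \<in> S" using closed_sequentially[OF \<open>closed S\<close> _ zl] zS by blast
      have "(\<lambda>n. \<psi> (z n)) \<longlonglongrightarrow> \<psi> l"
        unfolding \<psi>_def using zS zl \<open>l \<in> S\<close>
        by (intro tendsto_intros tendsto_bounded_additive_on[OF sub add bound]) auto
      then show ?thesis using \<open>l \<in> S\<close> \<open>(\<lambda>n. \<psi> (z n)) \<longlonglongrightarrow> v\<close> LIMSEQ_unique by force
    qed
  qed simp
  then obtain p where pS: "p \<in> S" and p_min: "\<And>w. w \<in> S \<Longrightarrow> \<psi> p \<le> \<psi> w" by blast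
  have "inner p w = lf w" if wS: "w \<in> S" for w
  proof -
    have "0 \<le> (2 * (inner p w - lf w)) * t + (norm w)\<^sup>2 * t\<^sup>2" for t
    proof -
      have "p + t *\<^sub>R w \<in> S" using sub pS wS by (simp add: subspace_add subspace_mul)
      moreover have "lf (p + t *\<^sub>R w) = lf p + t * lf w" using add scale pS wS sub by (simp add: subspace_mul)
      ultimately show ?thesis using p_min[of "p + t *\<^sub>R w"] unfolding \<psi>_def
        by (simp add: power2_norm_add power_mult_distrib algebra_simps)
    qed
    then show ?thesis using quadratic_nonneg_imp_linear_coeff_0[of "2 * (inner p w - lf w)" "(norm w)\<^sup>2"] by simp
  qed
  then show ?thesis using pS by blast
qed

text \<open>\<open>adjoint\<close> is a choice among all functions satisfying the adjoint identity; the
  Riesz representation shows that such a function exists, so the choice satisfies it.\<close>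

lemma inner_adjoint_blinfun:
  fixes f :: "'a::{real_inner,complete_space} \<Rightarrow>\<^sub>L 'b::real_inner"
  shows "inner (adjoint (blinfun_apply f) r) v = inner r (blinfun_apply f v)"
proof -
  have "\<exists>p. \<forall>v. inner p v = inner r (blinfun_apply f v)" for r
  proof -
    have "\<bar>inner r (blinfun_apply f w)\<bar> \<le> norm r * norm f * norm w" for w
      using Cauchy_Schwarz_ineq2[of r "blinfun_apply f w"] norm_blinfun[of f w]
      by (smt (verit, best) mult.assoc mult_left_mono norm_ge_zero)
    then have "\<exists>p\<in>UNIV. \<forall>w\<in>UNIV. inner p w = inner r (blinfun_apply f w)"
      by (intro riesz_representation_subspace)
        (auto simp: blinfun.add_right blinfun.scaleR_right inner_add_right)
    then show ?thesis by blast
  qed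
  then obtain g where g: "\<And>r v. inner (g r) v = inner r (blinfun_apply f v)" by metis
  have "\<forall>x y. inner (blinfun_apply f x) y = inner x (adjoint (blinfun_apply f) y)"
    unfolding adjoint_def by (rule someI[where x = g]) (metis g inner_commute)
  then show ?thesis by (simp add: inner_commute)
qed

lemma norm_adjoint_blinfun_le:
  fixes f :: "'a::{real_inner,complete_space} \<Rightarrow>\<^sub>L 'b::real_inner"
  shows "norm (adjoint (blinfun_apply f) r) \<le> norm f * norm r"
proof -
  define g where "g = adjoint (blinfun_apply f) r"
  have "norm g * norm g = inner r (blinfun_apply f g)"
    by (metis g_def inner_adjoint_blinfun power2_eq_square power2_norm_eq_inner)
  also have "\<dots> \<le> norm r * norm (blinfun_apply f g)" using Cauchy_Schwarz_ineq2 abs_le_D1 by blast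
  also have "\<dots> \<le> norm r * (norm f * norm g)" by (simp add: mult_left_mono norm_blinfun)
  also have "\<dots> = (norm f * norm r) * norm g" by (simp add: mult_ac)
  finally have "norm g * norm g \<le> (norm f * norm r) * norm g" .
  then have "norm g \<le> norm f * norm r" if "norm g > 0"
    using that by (rule mult_right_le_imp_le)
  then show ?thesis unfolding g_def by fastforce
qed

lemma weakly_conv_inner: "weakly_conv z p \<Longrightarrow> (\<lambda>n. inner (z n) w) \<longlonglongrightarrow> inner p w"
  by (simp add: weakly_conv_def)

lemma weakly_conv_orthogonal:
  assumes "weakly_conv z p" and orth: "\<And>n. inner (z n - c) v = 0"
  shows "inner (p - c) v = 0"
proof -
  have "(\<lambda>n. inner (z n - c) v) \<longlonglongrightarrow> inner (p - c) v"
    unfolding inner_diff_left by (intro tendsto_diff weakly_conv_inner[OF assms(1)] tendsto_const)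
  then show ?thesis using orth LIMSEQ_unique[OF _ tendsto_const] by simp
qed

lemma weakly_conv_norm_le:
  assumes "weakly_conv z p" and le: "\<And>n. norm (z n - c) \<le> r"
  shows "norm (p - c) \<le> r"
proof -
  have "(\<lambda>n. inner (z n - c) (p - c)) \<longlonglongrightarrow> inner (p - c) (p - c)"
    unfolding inner_diff_left by (intro tendsto_diff weakly_conv_inner[OF assms(1)] tendsto_const)
  moreover have "inner (z n - c) (p - c) \<le> r * norm (p - c)" for n
    using Cauchy_Schwarz_ineq2[of "z n - c" "p - c"] le[of n]
    by (smt (verit) mult_right_mono norm_ge_zero)
  ultimately have "norm (p - c) * norm (p - c) \<le> r * norm (p - c)"
    by (intro tendsto_le[OF _ tendsto_const]) (auto simp flip: power2_eq_square power2_norm_eq_inner)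
  moreover have "0 \<le> r" using le[of 0] norm_ge_zero order_trans by blast
  ultimately show ?thesis
    by (metis mult_right_le_imp_le norm_ge_zero order_le_less zero_le_mult_iff)
qed

lemma LIMSEQ_if_subseqs_have_LIMSEQ_subseq:
  fixes a :: "nat \<Rightarrow> 'a::metric_space"
  assumes sub: "\<And>q :: nat \<Rightarrow> nat. strict_mono q \<Longrightarrow>
                 \<exists>s :: nat \<Rightarrow> nat. strict_mono s \<and> (\<lambda>l. a (q (s l))) \<longlonglongrightarrow> L"
  shows "a \<longlonglongrightarrow> L"
proof (rule ccontr)
  assume "\<not> a \<longlonglongrightarrow> L"
  then obtain e where "e > 0" and "\<exists>\<^sub>F n in sequentially. e \<le> dist (a n) L"
    unfolding tendsto_iff by (auto simp: not_eventually not_less)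
  then have "infinite {n. e \<le> dist (a n) L}"
    by (simp add: frequently_cofinite flip: cofinite_eq_sequentially)
  then obtain q :: "nat \<Rightarrow> nat" where q: "strict_mono q" "\<And>n. e \<le> dist (a (q n)) L"
    using infinite_enumerate by blast
  obtain s where "(\<lambda>l. a (q (s l))) \<longlonglongrightarrow> L" using sub[OF q(1)] by blast
  from tendstoD[OF this \<open>e > 0\<close>] obtain M where "\<And>l. M \<le> l \<Longrightarrow> dist (a (q (s l))) L < e"
    by (auto simp: eventually_sequentially)
  then show False using q(2)[of "s M"] by force
qed

lemma weakly_conv_if_subseqs_have_weakly_conv_subseq:
  assumes sub: "\<And>q :: nat \<Rightarrow> nat. strict_mono q \<Longrightarrow>
                 \<exists>s :: nat \<Rightarrow> nat. strict_mono s \<and> weakly_conv (\<lambda>l. z (q (s l))) p"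
  shows "weakly_conv z p"
  unfolding weakly_conv_def
proof
  fix w
  show "(\<lambda>n. inner (z n) w) \<longlonglongrightarrow> inner p w"
    by (rule LIMSEQ_if_subseqs_have_LIMSEQ_subseq) (use sub weakly_conv_inner in blast)
qed

text \<open>A diagonal subsequence makes
  \<open>\<langle>x\<^sub>i, x\<^sub>j\<rangle>\<close> converge for every \<open>j\<close>; the vectors \<open>w\<close> with \<open>\<langle>x\<^sub>i, w\<rangle>\<close> convergent form a closed
  subspace, on which the limit functional is represented by Riesz.\<close>

lemma bounded_seq_diagonal_inner_convergent:
  fixes x :: "nat \<Rightarrow> 'a::real_inner"
  assumes bound: "\<And>n. norm (x n) \<le> B"
  shows "\<exists>d. strict_mono d \<and> (\<forall>j. convergent (\<lambda>i. inner (x (d i)) (x j)))"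
proof -
  have "0 \<le> B" using bound[of 0] norm_ge_zero order_trans by blast
  define P where "P = (\<lambda>j (s::nat\<Rightarrow>nat). convergent (\<lambda>i. inner (x (s i)) (x j)))"
  interpret subseqs P
  proof
    fix j and s :: "nat \<Rightarrow> nat" assume "strict_mono s"
    obtain r where r: "strict_mono r" "monoseq (\<lambda>n. inner (x (s (r n))) (x j))"
      using seq_monosub[of "\<lambda>i. inner (x (s i)) (x j)"] by blast
    have "\<bar>inner (x (s (r n))) (x j)\<bar> \<le> B * B" for n
      using Cauchy_Schwarz_ineq2 mult_mono[OF bound bound \<open>0 \<le> B\<close> norm_ge_zero] by (rule order_trans)
    then have "Bseq (\<lambda>n. inner (x (s (r n))) (x j))" by (intro BseqI') auto
    then show "\<exists>r'. strict_mono r' \<and> P j (s \<circ> r')"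
      using r Bseq_monoseq_convergent by (auto simp: P_def o_def)
  qed
  have "P j (diagseq \<circ> (+) (Suc j))" for j
  proof (rule diagseq_holds)
    show "P n (s \<circ> r)" if "strict_mono r" "P n s" for r s n
      using that convergent_subseq_convergent[of "\<lambda>i. inner (x (s i)) (x n)" r]
      by (simp add: P_def o_def)
  qed
  have "convergent (\<lambda>i. inner (x (diagseq i)) (x j))" for j
  proof -
    obtain L where "(\<lambda>i. inner (x (diagseq (i + Suc j))) (x j)) \<longlonglongrightarrow> L"
      using \<open>P j (diagseq \<circ> (+) (Suc j))\<close> unfolding P_def convergent_def o_def
      by (auto simp: add.commute)
    then have "(\<lambda>i. inner (x (diagseq i)) (x j)) \<longlonglongrightarrow> L" by (rule LIMSEQ_offset)
    then show ?thesis unfolding convergent_def by blast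
  qed
  then show ?thesis using subseq_diagseq by blast
qed

lemma closed_inner_convergent:
  fixes y :: "nat \<Rightarrow> 'a::real_inner"
  assumes bound: "\<And>n. norm (y n) \<le> B"
  shows "closed {w. convergent (\<lambda>i. inner (y i) w)}"
  unfolding closed_sequential_limits
proof (intro allI impI, elim conjE)
  fix w l assume wS: "\<forall>n. w n \<in> {w. convergent (\<lambda>i. inner (y i) w)}" and "w \<longlonglongrightarrow> l"
  have "0 \<le> B" using bound[of 0] norm_ge_zero order_trans by blast
  have "Cauchy (\<lambda>i. inner (y i) l)"
  proof (rule CauchyI)
    fix e :: real assume "0 < e"
    define e' where "e' = e / (3 * (B + 1))"
    have "e' > 0" "B * e' < e / 3"
      using \<open>0 < e\<close> \<open>0 \<le> B\<close> by (simp_all add: e'_def field_simps)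
    obtain n where n: "norm (w n - l) < e'"
      using \<open>w \<longlonglongrightarrow> l\<close> \<open>e' > 0\<close> by (metis LIMSEQ_iff_nz dist_norm order_refl)
    have near: "\<bar>inner (y i) (l - w n)\<bar> \<le> B * e'" for i
    proof -
      have "\<bar>inner (y i) (l - w n)\<bar> \<le> B * norm (l - w n)"
        using Cauchy_Schwarz_ineq2 mult_right_mono[OF bound norm_ge_zero] by (rule order_trans)
      also have "\<dots> \<le> B * e'"
        using n \<open>0 \<le> B\<close> by (simp add: mult_left_mono norm_minus_commute)
      finally show ?thesis .
    qed
    have "Cauchy (\<lambda>i. inner (y i) (w n))" using wS by (simp add: Cauchy_convergent_iff)
    then obtain M where M: "\<And>i j. M \<le> i \<Longrightarrow> M \<le> j \<Longrightarrow>
                              \<bar>inner (y i) (w n) - inner (y j) (w n)\<bar> < e / 3"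
      using CauchyD[of "\<lambda>i. inner (y i) (w n)" "e/3"] \<open>0 < e\<close> by (auto simp: real_norm_def)
    have split: "inner (y i) l - inner (y j) l
          = inner (y i) (l - w n) + (inner (y i) (w n) - inner (y j) (w n)) - inner (y j) (l - w n)"
      for i j by (simp add: inner_diff_right)
    show "\<exists>M. \<forall>i\<ge>M. \<forall>j\<ge>M. norm (inner (y i) l - inner (y j) l) < e"
    proof (intro exI allI impI)
      fix i j assume "M \<le> i" "M \<le> j"
      then show "norm (inner (y i) l - inner (y j) l) < e"
        using near[of i] near[of j] M[of i j] \<open>B * e' < e / 3\<close>
        unfolding real_norm_def split by linarith
    qed
  qed
  then show "l \<in> {w. convergent (\<lambda>i. inner (y i) w)}" by (simp add: Cauchy_convergent_iff)
qed

lemma weakly_conv_if_inner_convergent: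
  fixes y :: "nat \<Rightarrow> 'a::{real_inner,complete_space}"
  assumes bound: "\<And>n. norm (y n) \<le> B" and conv: "\<And>j. convergent (\<lambda>i. inner (y i) (y j))"
  shows "\<exists>p. weakly_conv y p"
proof -
  define S where "S = {w. convergent (\<lambda>i. inner (y i) w)}"
  define f where "f w = lim (\<lambda>i. inner (y i) w)" for w
  have sub: "subspace S"
    unfolding subspace_def S_def
    by (simp add: inner_add_right convergent_add convergent_const convergent_mult)
  have "closed S" unfolding S_def by (rule closed_inner_convergent[OF bound])
  have f: "(\<lambda>i. inner (y i) w) \<longlonglongrightarrow> f w" if "w \<in> S" for w
    using that by (simp add: S_def f_def convergent_LIMSEQ_iff)
  have "\<exists>p\<in>S. \<forall>w\<in>S. inner p w = f w"
  proof (rule riesz_representation_subspace[OF sub \<open>closed S\<close>, where B = B])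
    show "f (a + b) = f a + f b" if "a \<in> S" "b \<in> S" for a b
    proof -
      have "(\<lambda>i. inner (y i) (a + b)) \<longlonglongrightarrow> f a + f b"
        using tendsto_add[OF f[OF that(1)] f[OF that(2)]] by (simp add: inner_add_right)
      moreover have "a + b \<in> S" using sub that by (simp add: subspace_add)
      ultimately show ?thesis using f LIMSEQ_unique by blast
    qed
    show "f (c *\<^sub>R a) = c * f a" if "a \<in> S" for c a
    proof -
      have "(\<lambda>i. inner (y i) (c *\<^sub>R a)) \<longlonglongrightarrow> c * f a"
        using tendsto_mult_left[OF f[OF that], of c] by simp
      moreover have "c *\<^sub>R a \<in> S" using sub that by (simp add: subspace_mul)
      ultimately show ?thesis using f LIMSEQ_unique by blast
    qed
    show "\<bar>f w\<bar> \<le> B * norm w" if "w \<in> S" for w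
    proof (rule tendsto_le[OF _ tendsto_const tendsto_rabs[OF f[OF that]]])
      show "\<forall>\<^sub>F i in sequentially. \<bar>inner (y i) w\<bar> \<le> B * norm w"
        using Cauchy_Schwarz_ineq2 mult_right_mono[OF bound norm_ge_zero]
        by (intro always_eventually allI) (rule order_trans)
    qed simp
  qed
  then obtain p where "p \<in> S" and p: "\<And>w. w \<in> S \<Longrightarrow> inner p w = f w" by blast
  have "(\<lambda>i. inner (y i) v) \<longlonglongrightarrow> inner p v" for v
  proof -
    have "\<exists>q\<in>S. \<forall>w\<in>S. inner q w = inner v w"
      by (rule riesz_representation_subspace[OF sub \<open>closed S\<close>, where B = "norm v"])
        (simp_all add: inner_add_right Cauchy_Schwarz_ineq2)
    then obtain q where "q \<in> S" and q: "\<And>w. w \<in> S \<Longrightarrow> inner q w = inner v w" by blast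
    have "y i \<in> S" for i using conv by (simp add: S_def)
    then have "inner (y i) v = inner (y i) q" for i using q by (metis inner_commute)
    moreover have "inner p v = f q" using p[OF \<open>q \<in> S\<close>] q[OF \<open>p \<in> S\<close>] by (simp add: inner_commute)
    ultimately show ?thesis using f[OF \<open>q \<in> S\<close>] by simp
  qed
  then show ?thesis unfolding weakly_conv_def by blast
qed

lemma bounded_seq_weakly_conv_subseq:
  fixes x :: "nat \<Rightarrow> 'a::{real_inner,complete_space}"
  assumes "\<And>n. norm (x n) \<le> B"
  shows "\<exists>s p. strict_mono s \<and> weakly_conv (\<lambda>n. x (s n)) p"
proof -
  obtain d where "strict_mono d" and conv: "\<And>j. convergent (\<lambda>i. inner (x (d i)) (x j))"
    using bounded_seq_diagonal_inner_convergent assms by blast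
  have "\<exists>p. weakly_conv (\<lambda>i. x (d i)) p"
    using assms conv by (rule weakly_conv_if_inner_convergent)
  then show ?thesis using \<open>strict_mono d\<close> by blast
qed

section \<open>Strongly convex functionals\<close>

locale strongly_convex_functional =
  fixes R :: "'a::{real_inner,complete_space} \<Rightarrow> ereal" and \<sigma> :: real and x0 \<xi>0 :: 'a
  assumes proper: "proper_fun R" and lsc: "lsc_fun R" and sigma_pos: "\<sigma> > 0"
    and strongly_convex: "strongly_convex R \<sigma>" and subdiff_x0: "\<xi>0 \<in> subdiff R x0"
begin

definition Rreal :: "'a \<Rightarrow> real" where "Rreal z = real_of_ereal (R z)"

lemma ereal_Rreal: "R z \<noteq> \<infinity> \<Longrightarrow> R z = ereal (Rreal z)"
  using proper unfolding proper_fun_def Rreal_def by (cases "R z") auto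

lemma subdiff_finite: "\<xi> \<in> subdiff R x \<Longrightarrow> R x \<noteq> \<infinity>"
  by (simp add: subdiff_def)

lemma subdiff_ineq:
  assumes "\<xi> \<in> subdiff R x" "R z \<noteq> \<infinity>"
  shows "Rreal x + inner \<xi> (z - x) \<le> Rreal z"
proof -
  have "R x + ereal (inner \<xi> (z - x)) \<le> R z" using assms by (simp add: subdiff_def)
  then show ?thesis using ereal_Rreal[OF subdiff_finite[OF assms(1)]] ereal_Rreal[OF assms(2)] by simp
qed

lemma strongly_convex_ineq:
  assumes a: "R a \<noteq> \<infinity>" and b: "R b \<noteq> \<infinity>" and t: "0 \<le> t" "t \<le> 1"
  shows "R (t *\<^sub>R a + (1 - t) *\<^sub>R b) \<noteq> \<infinity>"
    "Rreal (t *\<^sub>R a + (1 - t) *\<^sub>R b) + \<sigma> * t * (1 - t) * (norm (a - b))\<^sup>2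
       \<le> t * Rreal a + (1 - t) * Rreal b"
proof -
  define p where "p = t *\<^sub>R a + (1 - t) *\<^sub>R b"
  have "R p + ereal (\<sigma> * t * (1 - t) * (norm (a - b))\<^sup>2) \<le> ereal t * R a + ereal (1 - t) * R b"
    using strongly_convex a b t unfolding strongly_convex_def p_def by blast
  also have "\<dots> = ereal (t * Rreal a + (1 - t) * Rreal b)"
    by (simp add: ereal_Rreal[OF a] ereal_Rreal[OF b])
  finally have le: "R p + ereal (\<sigma> * t * (1 - t) * (norm (a - b))\<^sup>2) \<le> ereal (t * Rreal a + (1 - t) * Rreal b)" .
  then have "R p \<noteq> \<infinity>" by auto
  then show "R (t *\<^sub>R a + (1 - t) *\<^sub>R b) \<noteq> \<infinity>" by (simp add: p_def)
  have "Rreal p + \<sigma> * t * (1 - t) * (norm (a - b))\<^sup>2 \<le> t * Rreal a + (1 - t) * Rreal b"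
    using le by (simp add: ereal_Rreal[OF \<open>R p \<noteq> \<infinity>\<close>])
  then show "Rreal (t *\<^sub>R a + (1 - t) *\<^sub>R b) + \<sigma> * t * (1 - t) * (norm (a - b))\<^sup>2
       \<le> t * Rreal a + (1 - t) * Rreal b" by (simp add: p_def)
qed

lemma subdiff_quadratic_growth:
  assumes \<xi>: "\<xi> \<in> subdiff R x" and "R z \<noteq> \<infinity>"
  shows "Rreal x + inner \<xi> (z - x) + \<sigma> * (norm (z - x))\<^sup>2 \<le> Rreal z"
proof (rule add_le_if_add_shrunk_le)
  fix t :: real assume t: "0 < t" "t \<le> 1"
  define p where "p = t *\<^sub>R z + (1 - t) *\<^sub>R x"
  have "R p \<noteq> \<infinity>"
    and convex: "Rreal p + \<sigma> * t * (1 - t) * (norm (z - x))\<^sup>2 \<le> t * Rreal z + (1 - t) * Rreal x"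
    using strongly_convex_ineq[OF \<open>R z \<noteq> \<infinity>\<close> subdiff_finite[OF \<xi>], of t] t by (simp_all add: p_def)
  have "Rreal x + inner \<xi> (p - x) \<le> Rreal p" by (rule subdiff_ineq[OF \<xi> \<open>R p \<noteq> \<infinity>\<close>])
  moreover have "p - x = t *\<^sub>R (z - x)" by (simp add: p_def algebra_simps)
  ultimately have "t * (Rreal x + inner \<xi> (z - x) + (1 - t) * (\<sigma> * (norm (z - x))\<^sup>2)) \<le> t * Rreal z"
    using convex by (simp add: algebra_simps)
  then show "Rreal x + inner \<xi> (z - x) + (1 - t) * (\<sigma> * (norm (z - x))\<^sup>2) \<le> Rreal z"
    using t by simp
qed

lemma subdiff_iff_minimises_tilted:
  "\<xi> \<in> subdiff R x \<longleftrightarrow> (\<forall>z. R x - ereal (inner \<xi> x) \<le> R z - ereal (inner \<xi> z))"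
proof
  assume \<xi>: "\<xi> \<in> subdiff R x"
  show "\<forall>z. R x - ereal (inner \<xi> x) \<le> R z - ereal (inner \<xi> z)"
  proof
    fix z show "R x - ereal (inner \<xi> x) \<le> R z - ereal (inner \<xi> z)"
      using subdiff_ineq[OF \<xi>, of z] ereal_Rreal[OF subdiff_finite[OF \<xi>]] ereal_Rreal[of z]
      by (cases "R z = \<infinity>") (auto simp: inner_diff_right)
  qed
next
  assume min: "\<forall>z. R x - ereal (inner \<xi> x) \<le> R z - ereal (inner \<xi> z)"
  have "R x0 \<noteq> \<infinity>" by (rule subdiff_finite[OF subdiff_x0])
  then have "R x \<noteq> \<infinity>" using min[rule_format, of x0] ereal_Rreal[of x0] by auto
  moreover have "R x + ereal (inner \<xi> (z - x)) \<le> R z" for z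
    using min[rule_format, of z] ereal_Rreal[OF \<open>R x \<noteq> \<infinity>\<close>] ereal_Rreal[of z]
    by (cases "R z = \<infinity>") (auto simp: inner_diff_right)
  ultimately show "\<xi> \<in> subdiff R x" by (simp add: subdiff_def)
qed

lemma subdiff_point_unique:
  assumes "\<xi> \<in> subdiff R x" "\<xi> \<in> subdiff R x'"
  shows "x' = x"
proof -
  have "Rreal x + inner \<xi> (x' - x) + \<sigma> * (norm (x' - x))\<^sup>2 \<le> Rreal x'"
    "Rreal x' + inner \<xi> (x - x') + \<sigma> * (norm (x - x'))\<^sup>2 \<le> Rreal x"
    using subdiff_quadratic_growth assms subdiff_finite by blast+
  then have "2 * \<sigma> * (norm (x' - x))\<^sup>2 \<le> 0"
    by (simp add: inner_diff_right norm_minus_commute)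
  then show "x' = x" using sigma_pos by (simp add: mult_le_0_iff)
qed

text \<open>Strong convexity makes \<open>R - \<langle>\<xi>, \<cdot>\<rangle>\<close> coercive, bounded below by comparison with the
  subgradient \<open>\<xi>\<^sub>0\<close> at \<open>x\<^sub>0\<close>, and uniformly convex, so it attains its minimum.\<close>

lemma ex_subdiff_point: "\<exists>x. \<xi> \<in> subdiff R x"
proof -
  define C where "C = {z. R z \<noteq> \<infinity>}"
  define \<phi> where "\<phi> z = Rreal z - inner \<xi> z" for z
  have half: "(1/2) *\<^sub>R (a + b) = (1/2) *\<^sub>R a + (1 - 1/2) *\<^sub>R b" for a b :: 'a
    by (simp add: algebra_simps)
  have "\<exists>z\<in>C. \<forall>w\<in>C. \<phi> z \<le> \<phi> w"
  proof (rule uniformly_midconvex_attains_min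
      [where B = "Rreal x0 - inner \<xi> x0 - (norm (\<xi>0 - \<xi>))\<^sup>2 / (4 * \<sigma>)" and c = "\<sigma> / 4"])
    show "x0 \<in> C" using subdiff_finite[OF subdiff_x0] by (simp add: C_def)
    show "(1/2) *\<^sub>R (a + b) \<in> C" if "a \<in> C" "b \<in> C" for a b
      using strongly_convex_ineq(1)[of a b "1/2"] that by (simp add: C_def half)
    show "Rreal x0 - inner \<xi> x0 - (norm (\<xi>0 - \<xi>))\<^sup>2 / (4 * \<sigma>) \<le> \<phi> z" if "z \<in> C" for z
      using subdiff_quadratic_growth[OF subdiff_x0, of z] that sigma_pos
        inner_plus_quadratic_lower_bound[of \<sigma> "\<xi>0 - \<xi>" "z - x0"]
      by (simp add: C_def \<phi>_def inner_diff_left inner_diff_right)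
    show "2 * \<phi> ((1/2) *\<^sub>R (a + b)) + 2 * (\<sigma> / 4) * (norm (a - b))\<^sup>2 \<le> \<phi> a + \<phi> b"
      if "a \<in> C" "b \<in> C" for a b
      using strongly_convex_ineq(2)[of a b "1/2"] that
      by (simp add: C_def \<phi>_def half inner_add_right algebra_simps)
    show "l \<in> C \<and> \<phi> l \<le> v"
      if zC: "\<forall>n. z n \<in> C" and zl: "z \<longlonglongrightarrow> l" and "(\<lambda>n. \<phi> (z n)) \<longlonglongrightarrow> v" for z l v
    proof -
      have "(\<lambda>n. \<phi> (z n) + inner \<xi> (z n)) \<longlonglongrightarrow> v + inner \<xi> l"
        by (intro tendsto_intros \<open>(\<lambda>n. \<phi> (z n)) \<longlonglongrightarrow> v\<close> zl)
      then have "(\<lambda>n. ereal (Rreal (z n))) \<longlonglongrightarrow> ereal (v + inner \<xi> l)"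
        by (simp add: \<phi>_def)
      moreover have "(\<lambda>n. ereal (Rreal (z n))) = (\<lambda>n. R (z n))"
        using zC ereal_Rreal by (auto simp: C_def)
      ultimately have "(\<lambda>n. R (z n)) \<longlonglongrightarrow> ereal (v + inner \<xi> l)" by simp
      then have "R l \<le> ereal (v + inner \<xi> l)"
        using lsc zl unfolding lsc_fun_def by (metis lim_imp_Liminf trivial_limit_sequentially)
      moreover from this have "R l \<noteq> \<infinity>" by auto
      ultimately show ?thesis using ereal_Rreal[of l] by (simp add: C_def \<phi>_def)
    qed
  qed (use sigma_pos in simp)
  then obtain z where "R z \<noteq> \<infinity>" and min: "\<And>w. R w \<noteq> \<infinity> \<Longrightarrow> \<phi> z \<le> \<phi> w"
    by (auto simp: C_def)
  have "\<forall>w. R z - ereal (inner \<xi> z) \<le> R w - ereal (inner \<xi> w)"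
  proof
    fix w show "R z - ereal (inner \<xi> z) \<le> R w - ereal (inner \<xi> w)"
      using min[of w] ereal_Rreal[OF \<open>R z \<noteq> \<infinity>\<close>] ereal_Rreal[of w]
      by (cases "R w = \<infinity>") (auto simp: \<phi>_def)
  qed
  then show ?thesis using subdiff_iff_minimises_tilted by blast
qed

lemma grad_conj_eqI: "\<xi> \<in> subdiff R x \<Longrightarrow> grad_conj R \<xi> = x"
  unfolding grad_conj_def subdiff_iff_minimises_tilted[symmetric]
  using subdiff_point_unique by blast

lemma subdiff_grad_conj: "\<xi> \<in> subdiff R (grad_conj R \<xi>)"
  using ex_subdiff_point grad_conj_eqI by metis

lemma grad_conj_finite: "R (grad_conj R \<xi>) \<noteq> \<infinity>"
  using subdiff_finite subdiff_grad_conj by blast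

text \<open>The Bregman form of the \<open>1/(2\<sigma>)\<close>-Lipschitz continuity of \<open>\<nabla>R\<^sup>*\<close>: the left-hand
  side is \<open>D\<^sup>\<xi>\<^sup>'(x, x')\<close>.\<close>

lemma bregman_grad_conj_le:
  fixes \<xi> \<xi>' :: 'a
  defines "x \<equiv> grad_conj R \<xi>" and "x' \<equiv> grad_conj R \<xi>'"
  shows "Rreal x - Rreal x' - inner \<xi>' (x - x') \<le> (norm (\<xi>' - \<xi>))\<^sup>2 / (4 * \<sigma>)"
proof -
  have "Rreal x + inner \<xi> (x' - x) + \<sigma> * (norm (x' - x))\<^sup>2 \<le> Rreal x'"
    unfolding x_def x'_def by (rule subdiff_quadratic_growth[OF subdiff_grad_conj grad_conj_finite])
  moreover have "- (norm (\<xi> - \<xi>'))\<^sup>2 / (4 * \<sigma>) \<le> inner (\<xi> - \<xi>') (x' - x) + \<sigma> * (norm (x' - x))\<^sup>2"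
    by (rule inner_plus_quadratic_lower_bound[OF sigma_pos])
  ultimately show ?thesis
    by (simp add: norm_minus_commute inner_diff_left inner_diff_right)
qed

lemma grad_conj_half_norm_sq:
  assumes "R = (\<lambda>x. ereal ((norm x)\<^sup>2 / 2))"
  shows "grad_conj R \<xi> = \<xi>"
proof (rule grad_conj_eqI)
  have "(norm \<xi>)\<^sup>2 / 2 + inner \<xi> (z - \<xi>) \<le> (norm z)\<^sup>2 / 2" for z
    using zero_le_power2[of "norm (z - \<xi>)"]
    by (simp add: power2_norm_diff inner_diff_right inner_commute power2_norm_eq_inner)
  then show "\<xi> \<in> subdiff R \<xi>" by (simp add: subdiff_def assms)
qed

end

lemma step_beta_cases:
  fixes g m :: "'a::real_inner" and \<sigma> \<alpha> \<gamma> :: real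
  assumes "\<beta> > 0"
  defines "b \<equiv> step_beta \<beta> \<sigma> \<alpha> \<gamma> g m"
  shows "b = 0 \<or> (m \<noteq> 0 \<and> 0 < b \<and> b \<le> (\<alpha> * inner g m - 2 * \<sigma> * \<gamma>) / (norm m)\<^sup>2)"
proof -
  have "\<beta> \<noteq> \<infinity> \<Longrightarrow> real_of_ereal \<beta> > 0" using assms by (cases \<beta>) auto
  then show ?thesis by (auto simp: b_def step_beta_def Let_def min_def max_def)
qed

lemma step_beta_nonneg:
  fixes g m :: "'a::real_inner"
  shows "\<beta> > 0 \<Longrightarrow> 0 \<le> step_beta \<beta> \<sigma> \<alpha> \<gamma> g m"
  using step_beta_cases[of \<beta> \<sigma> \<alpha> \<gamma> g m] by force

text \<open>This is the inequality the choice of \<open>\<beta>\<^sub>n\<close> is designed for: the momentum term never costs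
  more in the descent estimate than the pure gradient step.\<close>

lemma step_beta_bound:
  fixes g m :: "'a::real_inner" and \<sigma> \<alpha> \<gamma> :: real
  assumes "\<sigma> > 0" "\<beta> > 0"
  defines "b \<equiv> step_beta \<beta> \<sigma> \<alpha> \<gamma> g m"
  shows "(norm (b *\<^sub>R m - \<alpha> *\<^sub>R g))\<^sup>2 / (4 * \<sigma>) + b * \<gamma> \<le> \<alpha>\<^sup>2 * (norm g)\<^sup>2 / (4 * \<sigma>)"
proof -
  have "b\<^sup>2 * (norm m)\<^sup>2 - 2 * b * \<alpha> * inner g m + 4 * \<sigma> * (b * \<gamma>) \<le> 0"
    using step_beta_cases[OF \<open>\<beta> > 0\<close>, of \<sigma> \<alpha> \<gamma> g m, folded b_def]
  proof (elim disjE conjE)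
    assume "m \<noteq> 0" "0 < b" and le: "b \<le> (\<alpha> * inner g m - 2 * \<sigma> * \<gamma>) / (norm m)\<^sup>2"
    then have "b * (norm m)\<^sup>2 \<le> \<alpha> * inner g m - 2 * \<sigma> * \<gamma>"
      by (simp add: pos_le_divide_eq)
    then have "b * (b * (norm m)\<^sup>2) \<le> b * (\<alpha> * inner g m - 2 * \<sigma> * \<gamma>)"
      using \<open>0 < b\<close> by (simp add: mult_left_mono)
    moreover have "0 \<le> b * (b * (norm m)\<^sup>2)" using \<open>0 < b\<close> by simp
    ultimately show ?thesis by (simp add: power2_eq_square algebra_simps)
  qed simp
  moreover have "(norm (b *\<^sub>R m - \<alpha> *\<^sub>R g))\<^sup>2 = b\<^sup>2 * (norm m)\<^sup>2 - 2 * b * \<alpha> * inner g m + \<alpha>\<^sup>2 * (norm g)\<^sup>2"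
    by (simp add: power2_norm_diff power_mult_distrib inner_commute)
  ultimately have "(norm (b *\<^sub>R m - \<alpha> *\<^sub>R g))\<^sup>2 + 4 * \<sigma> * (b * \<gamma>) \<le> \<alpha>\<^sup>2 * (norm g)\<^sup>2"
    by linarith
  then have "((norm (b *\<^sub>R m - \<alpha> *\<^sub>R g))\<^sup>2 + 4 * \<sigma> * (b * \<gamma>)) / (4 * \<sigma>) \<le> \<alpha>\<^sup>2 * (norm g)\<^sup>2 / (4 * \<sigma>)"
    using \<open>\<sigma> > 0\<close> by (simp add: divide_right_mono)
  then show ?thesis using \<open>\<sigma> > 0\<close> by (simp add: add_divide_distrib)
qed

section \<open>A single run of Algorithm 1\<close>

locale alg1_run = strongly_convex_functional R \<sigma> x0 \<xi>0
  for R :: "'a::{real_inner,complete_space} \<Rightarrow> ereal" and \<sigma> x0 \<xi>0 +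
  fixes F :: "'a \<Rightarrow> 'b::real_inner" and Lop :: "'a \<Rightarrow> ('a \<Rightarrow>\<^sub>L 'b)"
    and \<eta> Lc :: real and adaptive :: bool and \<mu>0 \<mu>1 :: real and \<beta> :: ereal
    and \<rho> :: real and xb :: 'a and y yd :: 'b and \<delta> \<tau> :: real
  assumes rho_pos: "\<rho> > 0"
    and solution: "F xb = y" and bregman_xb: "bregman R \<xi>0 xb x0 \<le> ereal (\<sigma> * \<rho>\<^sup>2)"
    and tcc: "\<And>x x'. x \<in> cball x0 (2 * \<rho>) \<Longrightarrow> x' \<in> cball x0 (2 * \<rho>) \<Longrightarrow>
               norm (F x - F x' - blinfun_apply (Lop x') (x - x')) \<le> \<eta> * norm (F x - F x')"
    and eta: "0 \<le> \<eta>" "\<eta> < 1" and Lc_pos: "Lc > 0"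
    and L_bound: "\<And>x. x \<in> cball x0 (2 * \<rho>) \<Longrightarrow> norm (Lop x) \<le> Lc"
    and tau: "\<tau> > 1" and beta_pos: "\<beta> > 0" and mu0: "\<mu>0 > 0" and mu1: "\<mu>1 > 0"
    and param: "1 - (1 + \<eta>) / \<tau> - \<eta> - \<mu>0 / (4 * \<sigma>) > 0"
    and delta_pos: "\<delta> > 0" and noise: "norm (yd - y) \<le> \<delta>"
begin

text \<open>\<open>state n = (\<xi>\<^sub>n, \<xi>\<^sub>n\<^sub>-\<^sub>1, \<gamma>\<^sub>n)\<close> and \<open>X n = x\<^sub>n\<close> in the notation of the algorithm;
  \<open>breg n\<close> is the Bregman distance \<open>D\<^sup>\<xi>\<^sup>\<^sub>n(xb, x\<^sub>n)\<close>.\<close>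

definition state :: "nat \<Rightarrow> 'a \<times> 'a \<times> real" where
  "state n = alg1 R F Lop \<sigma> \<eta> Lc adaptive \<mu>0 \<mu>1 \<beta> \<xi>0 yd \<delta> n"
definition xi :: "nat \<Rightarrow> 'a" where
  "xi n = fst (state n)"
definition xi_prev :: "nat \<Rightarrow> 'a" where
  "xi_prev n = fst (snd (state n))"
definition gam :: "nat \<Rightarrow> real" where
  "gam n = snd (snd (state n))"
definition X :: "nat \<Rightarrow> 'a" where
  "X n = grad_conj R (xi n)"
definition res :: "nat \<Rightarrow> 'b" where
  "res n = F (X n) - yd"
definition grad :: "nat \<Rightarrow> 'a" where
  "grad n = adjoint (blinfun_apply (Lop (X n))) (res n)"
definition alpha :: "nat \<Rightarrow> real" where
  "alpha n = step_alpha adaptive \<mu>0 \<mu>1 Lc (res n) (grad n)"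
definition mom :: "nat \<Rightarrow> 'a" where
  "mom n = xi n - xi_prev n"
definition beta_coef :: "nat \<Rightarrow> real" where
  "beta_coef n = step_beta \<beta> \<sigma> (alpha n) (gam n) (grad n) (mom n)"
definition breg :: "nat \<Rightarrow> real" where
  "breg n = Rreal xb - Rreal (X n) - inner (xi n) (xb - X n)"
definition decay :: "real" where
  "decay = 1 - (1 + \<eta>) / \<tau> - \<eta> - \<mu>0 / (4 * \<sigma>)"
definition alpha_min :: "real" where
  "alpha_min = min (\<mu>0 / Lc\<^sup>2) \<mu>1"

lemma alg1_init: "xi 0 = \<xi>0" "xi_prev 0 = \<xi>0" "gam 0 = 0"
  by (simp_all add: xi_def xi_prev_def gam_def state_def)

lemma alg1_Suc:
  "xi (Suc n) = xi n - alpha n *\<^sub>R grad n + beta_coef n *\<^sub>R mom n"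
  "xi_prev (Suc n) = xi n"
  "gam (Suc n) = inner (xi (Suc n) - xi n) (X (Suc n) - X n) - (1 - \<eta>) * alpha n * (norm (res n))\<^sup>2
      + (1 + \<eta>) * alpha n * \<delta> * norm (res n) + beta_coef n * gam n"
proof -
  obtain a b c where abc: "state n = (a, b, c)" by (cases "state n")
  then have "xi n = a" "xi_prev n = b" "gam n = c" by (simp_all add: xi_def xi_prev_def gam_def)
  moreover have "state (Suc n) = (a - alpha n *\<^sub>R grad n + beta_coef n *\<^sub>R mom n, a,
      inner (a - alpha n *\<^sub>R grad n + beta_coef n *\<^sub>R mom n - a)
            (grad_conj R (a - alpha n *\<^sub>R grad n + beta_coef n *\<^sub>R mom n) - X n)
      - (1 - \<eta>) * alpha n * (norm (res n))\<^sup>2 + (1 + \<eta>) * alpha n * \<delta> * norm (res n) + beta_coef n * c)"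
    using abc calculation
    by (simp add: state_def Let_def X_def res_def grad_def alpha_def mom_def beta_coef_def)
  ultimately show
    "xi (Suc n) = xi n - alpha n *\<^sub>R grad n + beta_coef n *\<^sub>R mom n"
    "xi_prev (Suc n) = xi n"
    "gam (Suc n) = inner (xi (Suc n) - xi n) (X (Suc n) - X n) - (1 - \<eta>) * alpha n * (norm (res n))\<^sup>2
      + (1 + \<eta>) * alpha n * \<delta> * norm (res n) + beta_coef n * gam n"
    by (simp_all add: xi_def xi_prev_def gam_def X_def)
qed

lemma X_0: "X 0 = x0"
  using grad_conj_eqI[OF subdiff_x0] by (simp add: X_def alg1_init)

lemma R_xb_finite: "R xb \<noteq> \<infinity>"
proof
  assume "R xb = \<infinity>"
  then have "bregman R \<xi>0 xb x0 = \<infinity>"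
    using ereal_Rreal[OF subdiff_finite[OF subdiff_x0]] by (simp add: bregman_def)
  then show False using bregman_xb by simp
qed

lemma breg_0_le: "breg 0 \<le> \<sigma> * \<rho>\<^sup>2"
proof -
  have "bregman R \<xi>0 xb x0 = ereal (breg 0)"
    by (simp add: bregman_def breg_def X_0 alg1_init ereal_Rreal[OF R_xb_finite]
        ereal_Rreal[OF subdiff_finite[OF subdiff_x0]])
  then show ?thesis using bregman_xb by simp
qed

lemma norm_le_breg: "\<sigma> * (norm (xb - X n))\<^sup>2 \<le> breg n"
  using subdiff_quadratic_growth[OF subdiff_grad_conj R_xb_finite, of "xi n"]
  by (simp add: breg_def X_def)

lemma norm_le_rho_if_breg_le:
  assumes "breg n \<le> breg 0"
  shows "norm (X n - xb) \<le> \<rho>"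
proof -
  have "\<sigma> * (norm (X n - xb))\<^sup>2 \<le> \<sigma> * \<rho>\<^sup>2"
    using norm_le_breg[of n] assms breg_0_le by (simp add: norm_minus_commute)
  then have "(norm (X n - xb))\<^sup>2 \<le> \<rho>\<^sup>2" using sigma_pos by simp
  then show ?thesis using power2_le_imp_le rho_pos by fastforce
qed

lemma xb_near_x0: "norm (xb - x0) \<le> \<rho>"
  using norm_le_rho_if_breg_le[of 0] by (simp add: X_0 norm_minus_commute)

lemma xb_in_cball: "xb \<in> cball x0 (2 * \<rho>)"
  using xb_near_x0 rho_pos by (simp add: dist_norm norm_minus_commute)

lemma X_in_cball_if_breg_le:
  assumes "breg n \<le> breg 0"
  shows "X n \<in> cball x0 (2 * \<rho>)"
proof -
  have "dist x0 (X n) \<le> dist x0 xb + dist xb (X n)" by (rule dist_triangle)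
  then show ?thesis
    using norm_le_rho_if_breg_le[OF assms] xb_near_x0 by (simp add: dist_norm norm_minus_commute)
qed

lemma norm_grad_le: "X n \<in> cball x0 (2 * \<rho>) \<Longrightarrow> norm (grad n) \<le> Lc * norm (res n)"
  unfolding grad_def
  using norm_adjoint_blinfun_le mult_right_mono[OF L_bound norm_ge_zero] by (rule order_trans)

text \<open>The tangential cone condition, applied at \<open>X n\<close> towards the solution \<open>xb\<close>.\<close>

lemma inner_grad_lower_bound:
  assumes "X n \<in> cball x0 (2 * \<rho>)"
  shows "(1 - \<eta>) * (norm (res n))\<^sup>2 - (1 + \<eta>) * \<delta> * norm (res n) \<le> inner (grad n) (X n - xb)"
proof -
  define r where "r = res n"
  define e where "e = F xb - F (X n) - blinfun_apply (Lop (X n)) (xb - X n)"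
  have "blinfun_apply (Lop (X n)) (X n - xb) = e + r + (yd - y)"
    by (simp add: e_def r_def res_def solution blinfun.diff_right algebra_simps)
  then have inner_grad: "inner (grad n) (X n - xb) = inner r e + (norm r)\<^sup>2 + inner r (yd - y)"
    by (simp add: grad_def inner_adjoint_blinfun r_def inner_add_right power2_norm_eq_inner)
  have "norm (F xb - F (X n)) = norm (r + (yd - y))"
    by (simp add: r_def res_def solution norm_minus_commute algebra_simps)
  also have "\<dots> \<le> norm r + \<delta>" using noise norm_triangle_ineq[of r "yd - y"] by linarith
  finally have "\<eta> * norm (F xb - F (X n)) \<le> \<eta> * (norm r + \<delta>)" by (rule mult_left_mono[OF _ eta(1)])
  then have "norm e \<le> \<eta> * (norm r + \<delta>)"
    using tcc[OF xb_in_cball assms] unfolding e_def by linarith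
  then have "norm r * norm e \<le> norm r * (\<eta> * (norm r + \<delta>))" by (simp add: mult_left_mono)
  moreover have "- (norm r * norm e) \<le> inner r e" using Cauchy_Schwarz_ineq2[of r e] by linarith
  moreover have "norm r * norm (yd - y) \<le> norm r * \<delta>" using noise by (simp add: mult_left_mono)
  moreover have "- (norm r * norm (yd - y)) \<le> inner r (yd - y)"
    using Cauchy_Schwarz_ineq2[of r "yd - y"] by linarith
  ultimately show ?thesis
    unfolding inner_grad r_def[symmetric] by (simp add: algebra_simps power2_eq_square)
qed

lemma alpha_nonneg: "0 \<le> alpha n"
  using mu0 mu1 Lc_pos by (auto simp: alpha_def step_alpha_def)

lemma alpha_norm_grad_le:
  assumes "X n \<in> cball x0 (2 * \<rho>)"
  shows "alpha n * (norm (grad n))\<^sup>2 \<le> \<mu>0 * (norm (res n))\<^sup>2"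
proof (cases adaptive)
  case True
  show ?thesis
  proof (cases "grad n = 0")
    case False
    then have "alpha n \<le> \<mu>0 * (norm (res n))\<^sup>2 / (norm (grad n))\<^sup>2"
      unfolding alpha_def step_alpha_def using True by simp
    then show ?thesis using False by (simp add: pos_le_divide_eq)
  qed (use mu0 in simp)
next
  case False
  have "(norm (grad n))\<^sup>2 \<le> (Lc * norm (res n))\<^sup>2"
    using norm_grad_le[OF assms] by (simp add: power_mono)
  then have "\<mu>0 / Lc\<^sup>2 * (norm (grad n))\<^sup>2 \<le> \<mu>0 / Lc\<^sup>2 * (Lc * norm (res n))\<^sup>2"
    using mu0 by (intro mult_left_mono) auto
  then show ?thesis
    using False Lc_pos unfolding alpha_def step_alpha_def by (simp add: power_mult_distrib)
qed

lemma alpha_min_le_alpha: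
  assumes "X n \<in> cball x0 (2 * \<rho>)"
  shows "alpha_min \<le> alpha n"
proof (cases "adaptive \<and> grad n \<noteq> 0")
  case True
  then have "0 < norm (res n)" using norm_grad_le[OF assms] Lc_pos by force
  then have "\<mu>0 / Lc\<^sup>2 = \<mu>0 * (norm (res n))\<^sup>2 / (Lc * norm (res n))\<^sup>2"
    by (simp add: power_mult_distrib)
  also have "\<dots> \<le> \<mu>0 * (norm (res n))\<^sup>2 / (norm (grad n))\<^sup>2"
    using True mu0 Lc_pos norm_grad_le[OF assms] \<open>0 < norm (res n)\<close>
    by (intro divide_left_mono power_mono) auto
  finally show ?thesis
    using True unfolding alpha_def step_alpha_def alpha_min_def by (simp add: min.coboundedI1)
qed (auto simp: alpha_def step_alpha_def alpha_min_def)

lemma alpha_min_pos: "alpha_min > 0"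
  using mu0 mu1 Lc_pos by (simp add: alpha_min_def)

lemma decay_pos: "decay > 0"
  using param by (simp add: decay_def)


lemma inner_increment_le:
  assumes "X n \<in> cball x0 (2 * \<rho>)" and "inner (mom n) (X n - xb) \<le> gam n"
  shows "inner (xi (Suc n) - xi n) (X n - xb)
           \<le> beta_coef n * gam n - alpha n * ((1 - \<eta>) * (norm (res n))\<^sup>2 - (1 + \<eta>) * \<delta> * norm (res n))"
proof -
  have "beta_coef n * inner (mom n) (X n - xb) \<le> beta_coef n * gam n"
    using mult_left_mono[OF assms(2) step_beta_nonneg[OF beta_pos]] by (simp add: beta_coef_def)
  moreover have "alpha n * ((1 - \<eta>) * (norm (res n))\<^sup>2 - (1 + \<eta>) * \<delta> * norm (res n))
                   \<le> alpha n * inner (grad n) (X n - xb)"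
    by (rule mult_left_mono[OF inner_grad_lower_bound[OF assms(1)] alpha_nonneg])
  ultimately show ?thesis by (simp add: alg1_Suc inner_diff_left)
qed

lemma mom_invariant_Suc:
  assumes "X n \<in> cball x0 (2 * \<rho>)" and "inner (mom n) (X n - xb) \<le> gam n"
  shows "inner (mom (Suc n)) (X (Suc n) - xb) \<le> gam (Suc n)"
proof -
  have "inner (mom (Suc n)) (X (Suc n) - xb)
          = inner (xi (Suc n) - xi n) (X (Suc n) - X n) + inner (xi (Suc n) - xi n) (X n - xb)"
    by (simp add: mom_def alg1_Suc inner_diff_right)
  then show ?thesis
    using inner_increment_le[OF assms] by (simp add: alg1_Suc(3) algebra_simps)
qed

text \<open>One step of the descent: the three-point identity splits \<open>breg (Suc n) - breg n\<close> into a
  Bregman distance between consecutive iterates and \<open>\<langle>\<xi>\<^sub>n\<^sub>+\<^sub>1 - \<xi>\<^sub>n, X n - xb\<rangle>\<close>.\<close>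

lemma breg_Suc_le:
  assumes inb: "X n \<in> cball x0 (2 * \<rho>)" and "inner (mom n) (X n - xb) \<le> gam n"
    and "\<tau> * \<delta> < norm (res n)"
  shows "breg (Suc n) \<le> breg n - decay * (alpha n * (norm (res n))\<^sup>2)"
proof -
  define a where "a = alpha n"
  define r where "r = norm (res n)"
  define d where "d = xi (Suc n) - xi n"
  have d_eq: "d = beta_coef n *\<^sub>R mom n - a *\<^sub>R grad n" by (simp add: d_def alg1_Suc a_def)
  have three_point: "breg (Suc n) - breg n
      = (Rreal (X n) - Rreal (X (Suc n)) - inner (xi (Suc n)) (X n - X (Suc n))) + inner d (X n - xb)"
    by (simp add: breg_def d_def inner_diff_left inner_diff_right algebra_simps)
  have "Rreal (X n) - Rreal (X (Suc n)) - inner (xi (Suc n)) (X n - X (Suc n)) \<le> (norm d)\<^sup>2 / (4 * \<sigma>)"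
    using bregman_grad_conj_le[of "xi n" "xi (Suc n)"] by (simp add: X_def d_def)
  moreover have "(norm d)\<^sup>2 / (4 * \<sigma>) + beta_coef n * gam n \<le> a\<^sup>2 * (norm (grad n))\<^sup>2 / (4 * \<sigma>)"
    unfolding d_eq beta_coef_def a_def by (rule step_beta_bound[OF sigma_pos beta_pos])
  moreover have "a\<^sup>2 * (norm (grad n))\<^sup>2 / (4 * \<sigma>) \<le> a * (\<mu>0 * r\<^sup>2) / (4 * \<sigma>)"
    using mult_left_mono[OF alpha_norm_grad_le[OF inb] alpha_nonneg] sigma_pos
    by (intro divide_right_mono) (auto simp: a_def r_def power2_eq_square mult_ac)
  moreover have "inner d (X n - xb) \<le> beta_coef n * gam n - a * ((1 - \<eta>) * r\<^sup>2 - (1 + \<eta>) * \<delta> * r)"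
    using inner_increment_le[OF assms(1,2)] by (simp add: d_def a_def r_def)
  moreover have "(1 + \<eta>) * \<delta> * r * a \<le> (1 + \<eta>) * (r\<^sup>2 / \<tau>) * a"
  proof -
    have "\<delta> \<le> r / \<tau>" using assms(3) tau by (simp add: r_def field_simps)
    then have "\<delta> * r \<le> r / \<tau> * r" by (rule mult_right_mono) (simp add: r_def)
    then have "\<delta> * r \<le> r\<^sup>2 / \<tau>" by (simp add: power2_eq_square)
    then have "(1 + \<eta>) * (\<delta> * r) * a \<le> (1 + \<eta>) * (r\<^sup>2 / \<tau>) * a"
      using eta alpha_nonneg by (intro mult_left_mono mult_right_mono) (auto simp: a_def)
    then show ?thesis by (simp add: mult_ac)
  qed
  moreover have "decay * (a * r\<^sup>2)
      = a * r\<^sup>2 - (1 + \<eta>) * (r\<^sup>2 / \<tau>) * a - \<eta> * (a * r\<^sup>2) - a * (\<mu>0 * r\<^sup>2) / (4 * \<sigma>)"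
    by (simp add: decay_def algebra_simps)
  ultimately show ?thesis unfolding a_def[symmetric] r_def[symmetric]
    using three_point by (simp add: algebra_simps)
qed


lemma breg_descent:
  assumes "\<forall>j<n. \<tau> * \<delta> < norm (res j)"
  shows "breg n + decay * (\<Sum>j<n. alpha j * (norm (res j))\<^sup>2) \<le> breg 0
           \<and> inner (mom n) (X n - xb) \<le> gam n"
  using assms
proof (induction n)
  case 0
  show ?case by (simp add: mom_def alg1_init)
next
  case (Suc n)
  then have IH: "breg n + decay * (\<Sum>j<n. alpha j * (norm (res j))\<^sup>2) \<le> breg 0"
    "inner (mom n) (X n - xb) \<le> gam n" by auto
  have "0 \<le> decay * (\<Sum>j<n. alpha j * (norm (res j))\<^sup>2)"
    using decay_pos alpha_nonneg by (simp add: sum_nonneg)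
  then have "X n \<in> cball x0 (2 * \<rho>)" using IH(1) by (intro X_in_cball_if_breg_le) linarith
  then show ?case
    using breg_Suc_le[of n] mom_invariant_Suc[of n] IH Suc.prems by (simp add: algebra_simps)
qed

lemma breg_le_breg_0: "\<forall>j<n. \<tau> * \<delta> < norm (res j) \<Longrightarrow> breg n \<le> breg 0"
  using breg_descent[of n] decay_pos alpha_nonneg
  by (smt (verit) mult_nonneg_nonneg sum_nonneg zero_le_power2)

text \<open>Until the discrepancy principle stops, every step decreases \<open>breg\<close> by at least the
  fixed amount \<open>decay \<cdot> alpha_min \<cdot> (\<tau>\<delta>)\<^sup>2\<close>, and \<open>breg\<close> is nonnegative.\<close>

lemma discrepancy_reached: "\<exists>n. norm (res n) \<le> \<tau> * \<delta>"
proof (rule ccontr)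
  assume "\<not> ?thesis"
  then have large: "\<And>n. \<tau> * \<delta> < norm (res n)" by (simp add: not_le)
  define q where "q = alpha_min * (\<tau> * \<delta>)\<^sup>2"
  have "q > 0" using alpha_min_pos tau delta_pos by (simp add: q_def)
  have "q \<le> alpha j * (norm (res j))\<^sup>2" for j
  proof -
    have "X j \<in> cball x0 (2 * \<rho>)" using breg_le_breg_0 large by (intro X_in_cball_if_breg_le) auto
    then have "alpha_min \<le> alpha j" by (rule alpha_min_le_alpha)
    moreover have "(\<tau> * \<delta>)\<^sup>2 \<le> (norm (res j))\<^sup>2"
      using large[of j] tau delta_pos by (intro power_mono) auto
    ultimately show ?thesis unfolding q_def using alpha_min_pos by (intro mult_mono) auto
  qed
  then have "real n * q \<le> (\<Sum>j<n. alpha j * (norm (res j))\<^sup>2)" for n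
    using sum_mono[of "{..<n}" "\<lambda>j. q"] by simp
  moreover have "0 \<le> breg n" for n
    using norm_le_breg[of n] sigma_pos by (smt (verit) mult_nonneg_nonneg zero_le_power2)
  ultimately have "decay * (real n * q) \<le> breg 0" for n
    using breg_descent[of n] large decay_pos by (smt (verit) mult_left_mono)
  moreover obtain n :: nat where "breg 0 / (decay * q) < n" using reals_Archimedean2 by blast
  then have "breg 0 < decay * (real n * q)" using decay_pos \<open>q > 0\<close> by (simp add: field_simps)
  ultimately show False by (meson not_le)
qed

definition n_stop :: "nat" where
  "n_stop = (LEAST n. norm (res n) \<le> \<tau> * \<delta>)"

lemma n_stop_discrepancy: "norm (res n_stop) \<le> \<tau> * \<delta>"
  unfolding n_stop_def using discrepancy_reached by (rule LeastI_ex)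

lemma before_n_stop: "j < n_stop \<Longrightarrow> \<tau> * \<delta> < norm (res j)"
  unfolding n_stop_def by (drule not_less_Least) (simp add: not_le)

lemma alg1_stop_eq: "alg1_stop R F Lop \<sigma> \<eta> Lc adaptive \<mu>0 \<mu>1 \<beta> \<xi>0 yd \<delta> \<tau> = n_stop"
  by (simp add: alg1_stop_def n_stop_def res_def X_def xi_def state_def alg1_x_def)

lemma alg1_x_eq: "alg1_x R F Lop \<sigma> \<eta> Lc adaptive \<mu>0 \<mu>1 \<beta> \<xi>0 yd \<delta> n = X n"
  by (simp add: X_def xi_def state_def alg1_x_def)

lemma stopped_iterate_near_xb: "norm (X n_stop - xb) \<le> \<rho>"
  using norm_le_rho_if_breg_le breg_le_breg_0 before_n_stop by blast

lemma stopped_iterate_in_cball: "X n_stop \<in> cball x0 (2 * \<rho>)"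
  using X_in_cball_if_breg_le breg_le_breg_0 before_n_stop by blast

text \<open>For \<open>R = \<parallel>\<cdot>\<parallel>\<^sup>2/2\<close> the dual iterates are the primal ones, and each increment is a
  combination of \<open>L(X n)\<^sup>* r\<^sub>n\<close> and the previous increment, hence orthogonal to every common
  null vector of the operators \<open>L(x)\<close>.\<close>

lemma xi_orthogonal_common_kernel:
  assumes R: "R = (\<lambda>x. ereal ((norm x)\<^sup>2 / 2))"
    and ker: "\<And>x. x \<in> cball x0 (2 * \<rho>) \<Longrightarrow> blinfun_apply (Lop x) v = 0"
    and "\<forall>j<n. \<tau> * \<delta> < norm (res j)"
  shows "inner (xi n - x0) v = 0 \<and> inner (xi_prev n - x0) v = 0"
  using assms(3)
proof (induction n)
  case 0
  have "x0 = \<xi>0" using grad_conj_eqI[OF subdiff_x0] grad_conj_half_norm_sq[OF R] by simp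
  then show ?case by (simp add: alg1_init)
next
  case (Suc n)
  then have IH: "inner (xi n - x0) v = 0" "inner (xi_prev n - x0) v = 0" by auto
  have "X n \<in> cball x0 (2 * \<rho>)" using breg_le_breg_0 Suc.prems by (intro X_in_cball_if_breg_le) auto
  then have "inner (grad n) v = 0" using ker by (simp add: grad_def inner_adjoint_blinfun)
  moreover have "xi (Suc n) - x0
      = (xi n - x0) - alpha n *\<^sub>R grad n + beta_coef n *\<^sub>R ((xi n - x0) - (xi_prev n - x0))"
    by (simp add: alg1_Suc mom_def algebra_simps)
  ultimately show ?case using IH by (simp add: alg1_Suc(2) inner_diff_left inner_add_left)
qed

lemma stopped_iterate_orthogonal_common_kernel:
  assumes "R = (\<lambda>x. ereal ((norm x)\<^sup>2 / 2))"
    and "\<And>x. x \<in> cball x0 (2 * \<rho>) \<Longrightarrow> blinfun_apply (Lop x) v = 0"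
  shows "inner (X n_stop - x0) v = 0"
  using xi_orthogonal_common_kernel[OF assms, of n_stop] before_n_stop
    grad_conj_half_norm_sq[OF assms(1)]
  by (simp add: X_def)

end

section \<open>Runs with vanishing noise\<close>

locale alg1_noisy_runs =
  fixes R :: "'a::{real_inner,complete_space} \<Rightarrow> ereal" and \<sigma> :: real and x0 \<xi>0 :: 'a
    and F :: "'a \<Rightarrow> 'b::real_inner" and Lop :: "'a \<Rightarrow> ('a \<Rightarrow>\<^sub>L 'b)"
    and \<eta> Lc :: real and adaptive :: bool and \<mu>0 \<mu>1 :: real and \<beta> :: ereal
    and \<rho> :: real and xb :: 'a and y :: 'b and yd :: "nat \<Rightarrow> 'b" and \<delta> :: "nat \<Rightarrow> real"
    and \<tau> :: real and D :: "'a set"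
  assumes run: "\<And>k. alg1_run R \<sigma> x0 \<xi>0 F Lop \<eta> Lc \<mu>0 \<mu>1 \<beta> \<rho> xb y (yd k) (\<delta> k) \<tau>"
    and ball_dom: "cball x0 (2 * \<rho>) \<subseteq> D"
    and F_weakly_closed: "\<And>xs x v. (\<forall>n. xs n \<in> D) \<Longrightarrow> weakly_conv xs x \<Longrightarrow>
                          (\<lambda>n. F (xs n)) \<longlonglongrightarrow> v \<Longrightarrow> x \<in> D \<and> F x = v"
    and delta_lim: "\<delta> \<longlonglongrightarrow> 0"
begin

definition x_stop :: "nat \<Rightarrow> 'a" where
  "x_stop k = alg1_x R F Lop \<sigma> \<eta> Lc adaptive \<mu>0 \<mu>1 \<beta> \<xi>0 (yd k) (\<delta> k)
                         (alg1_stop R F Lop \<sigma> \<eta> Lc adaptive \<mu>0 \<mu>1 \<beta> \<xi>0 (yd k) (\<delta> k) \<tau>)"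

sublocale run0: alg1_run R \<sigma> x0 \<xi>0 F Lop \<eta> Lc adaptive \<mu>0 \<mu>1 \<beta> \<rho> xb y "yd 0" "\<delta> 0" \<tau>
  by (rule run)

lemma x_stop_props:
  "norm (F (x_stop k) - y) \<le> (\<tau> + 1) * \<delta> k"
  "norm (x_stop k - xb) \<le> \<rho>" "x_stop k \<in> cball x0 (2 * \<rho>)"
proof -
  interpret r: alg1_run R \<sigma> x0 \<xi>0 F Lop \<eta> Lc adaptive \<mu>0 \<mu>1 \<beta> \<rho> xb y "yd k" "\<delta> k" \<tau>
    by (rule run)
  have "x_stop k = r.X r.n_stop" by (simp add: x_stop_def r.alg1_stop_eq r.alg1_x_eq)
  moreover have "norm (F (r.X r.n_stop) - y) \<le> norm (F (r.X r.n_stop) - yd k) + norm (yd k - y)"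
    using norm_triangle_ineq[of "F (r.X r.n_stop) - yd k" "yd k - y"] by simp
  ultimately show "norm (F (x_stop k) - y) \<le> (\<tau> + 1) * \<delta> k"
    using r.n_stop_discrepancy r.noise by (simp add: r.res_def algebra_simps)
  show "norm (x_stop k - xb) \<le> \<rho>" "x_stop k \<in> cball x0 (2 * \<rho>)"
    using \<open>x_stop k = _\<close> r.stopped_iterate_near_xb r.stopped_iterate_in_cball by simp_all
qed

lemma x_stop_orthogonal_common_kernel:
  assumes "R = (\<lambda>x. ereal ((norm x)\<^sup>2 / 2))"
    and "\<And>x. x \<in> cball x0 (2 * \<rho>) \<Longrightarrow> blinfun_apply (Lop x) v = 0"
  shows "inner (x_stop k - x0) v = 0"
proof -
  interpret r: alg1_run R \<sigma> x0 \<xi>0 F Lop \<eta> Lc adaptive \<mu>0 \<mu>1 \<beta> \<rho> xb y "yd k" "\<delta> k" \<tau>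
    by (rule run)
  show ?thesis using r.stopped_iterate_orthogonal_common_kernel[OF assms]
    by (simp add: x_stop_def r.alg1_stop_eq r.alg1_x_eq)
qed

text \<open>The stopped iterates are bounded, and their residuals for the exact data vanish, so weak
  compactness and the weak closedness of \<open>F\<close> apply along any subsequence.\<close>

lemma subseq_weakly_conv_to_solution:
  fixes q :: "nat \<Rightarrow> nat"
  assumes "strict_mono q"
  shows "\<exists>s p. strict_mono s \<and> weakly_conv (\<lambda>l. x_stop (q (s l))) p \<and> p \<in> D \<and> F p = y
               \<and> norm (p - xb) \<le> \<rho>"
proof -
  have "norm (x_stop (q l)) \<le> norm xb + \<rho>" for l
    using x_stop_props(2)[of "q l"] norm_triangle_sub[of "x_stop (q l)" xb] by linarith
  from bounded_seq_weakly_conv_subseq[of "\<lambda>l. x_stop (q l)", OF this]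
  obtain s p where "strict_mono s" and weak: "weakly_conv (\<lambda>l. x_stop (q (s l))) p"
    by blast
  have "(\<lambda>l. \<delta> (q (s l))) \<longlonglongrightarrow> 0"
    using LIMSEQ_subseq_LIMSEQ[OF delta_lim strict_mono_o[OF assms \<open>strict_mono s\<close>]]
    by (simp add: o_def)
  then have "(\<lambda>l. (\<tau> + 1) * \<delta> (q (s l))) \<longlonglongrightarrow> 0" by (rule tendsto_mult_right_zero)
  moreover have "\<forall>\<^sub>F l in sequentially. norm (F (x_stop (q (s l))) - y) \<le> (\<tau> + 1) * \<delta> (q (s l))"
    using x_stop_props(1) by (intro always_eventually allI)
  ultimately have "(\<lambda>l. F (x_stop (q (s l))) - y) \<longlonglongrightarrow> 0" by (rule Lim_null_comparison[rotated])
  then have "(\<lambda>l. F (x_stop (q (s l)))) \<longlonglongrightarrow> y" by (simp add: LIM_zero_iff)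
  moreover have "\<forall>l. x_stop (q (s l)) \<in> D" using x_stop_props(3) ball_dom by blast
  ultimately have "p \<in> D" "F p = y" using F_weakly_closed[OF _ weak] by auto
  moreover have "\<And>l. norm (x_stop (q (s l)) - xb) \<le> \<rho>" by (rule x_stop_props(2))
  then have "norm (p - xb) \<le> \<rho>" by (rule weakly_conv_norm_le[OF weak])
  ultimately show ?thesis using \<open>strict_mono s\<close> weak by (intro exI conjI)
qed

lemma cball_if_near_xb: "norm (p - xb) \<le> \<rho> \<Longrightarrow> p \<in> cball x0 (2 * \<rho>)"
  using run0.xb_near_x0 dist_triangle[of x0 p xb] by (simp add: dist_norm norm_minus_commute)


lemma ex_subseq_weakly_conv_to_solution:
  "\<exists>kl p. strict_mono kl \<and> p \<in> D \<and> F p = y \<and> p \<in> cball x0 (2 * \<rho>)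
           \<and> weakly_conv (\<lambda>l. x_stop (kl l)) p"
  using subseq_weakly_conv_to_solution[OF strict_mono_id] cball_if_near_xb by auto

lemma min_dist_solution_in_cball:
  assumes "\<And>z. z \<in> D \<Longrightarrow> F z = y \<Longrightarrow> norm (xd - x0) \<le> norm (z - x0)"
  shows "norm (xd - x0) \<le> \<rho>" "xd \<in> cball x0 (2 * \<rho>)"
proof -
  have "xb \<in> D" using run0.xb_in_cball ball_dom by blast
  then show "norm (xd - x0) \<le> \<rho>"
    using assms[OF _ run0.solution] run0.xb_near_x0 by fastforce
  then show "xd \<in> cball x0 (2 * \<rho>)"
    using run0.rho_pos by (simp add: dist_norm norm_minus_commute)
qed

text \<open>A solution of minimal distance to \<open>x0\<close> is orthogonal to the null space of \<open>L\<close> at it: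
  by the tangential cone condition, \<open>xd + t w\<close> is again a solution for \<open>w\<close> in that null space
  and small \<open>t\<close>.\<close>

lemma min_dist_solution_orthogonal_kernel:
  assumes "F xd = y" and xd_min: "\<And>z. z \<in> D \<Longrightarrow> F z = y \<Longrightarrow> norm (xd - x0) \<le> norm (z - x0)"
    and v: "blinfun_apply (Lop xd) v = 0"
  shows "inner (xd - x0) v = 0"
proof (cases "v = 0")
  case False
  note xd_near = min_dist_solution_in_cball(1)[OF xd_min]
    and xd_in = min_dist_solution_in_cball(2)[OF xd_min]
  define w where "w = (\<rho> / norm v) *\<^sub>R v"
  have "norm w = \<rho>" using False run0.rho_pos by (simp add: w_def)
  have "0 \<le> (2 * inner (xd - x0) w) * t + (norm w)\<^sup>2 * t\<^sup>2" if "\<bar>t\<bar> \<le> 1" for t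
  proof -
    define z where "z = xd + t *\<^sub>R w"
    have "norm (t *\<^sub>R w) \<le> \<rho>" using that \<open>norm w = \<rho>\<close> run0.rho_pos by (simp add: mult_left_le_one_le)
    then have "norm (z - x0) \<le> 2 * \<rho>"
      using xd_near norm_triangle_ineq[of "xd - x0" "t *\<^sub>R w"] by (simp add: z_def algebra_simps)
    then have z_in: "z \<in> cball x0 (2 * \<rho>)" by (simp add: dist_norm norm_minus_commute)
    have "blinfun_apply (Lop xd) (z - xd) = 0" using v by (simp add: z_def w_def blinfun.scaleR_right)
    then have "norm (F z - y) \<le> \<eta> * norm (F z - y)"
      using run0.tcc[OF z_in xd_in] \<open>F xd = y\<close> by simp
    then have "(1 - \<eta>) * norm (F z - y) \<le> 0" by (simp add: algebra_simps)
    then have "F z = y" using run0.eta by (simp add: mult_le_0_iff)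
    then have "(norm (xd - x0))\<^sup>2 \<le> (norm (z - x0))\<^sup>2"
      using xd_min z_in ball_dom by (simp add: power_mono subset_iff)
    also have "\<dots> = (norm (xd - x0))\<^sup>2 + 2 * inner (xd - x0) (t *\<^sub>R w) + (norm (t *\<^sub>R w))\<^sup>2"
      using power2_norm_add[of "xd - x0" "t *\<^sub>R w"] by (simp add: z_def algebra_simps)
    finally show ?thesis by (simp add: power_mult_distrib algebra_simps)
  qed
  then have "2 * inner (xd - x0) w = 0"
    using quadratic_nonneg_imp_linear_coeff_0[of "2 * inner (xd - x0) w" "(norm w)\<^sup>2"] by simp
  then show ?thesis using False run0.rho_pos by (simp add: w_def)
qed simp

text \<open>For \<open>R = \<parallel>\<cdot>\<parallel>\<^sup>2/2\<close>, both \<open>x_stop k - x0\<close> and \<open>xd - x0\<close> are orthogonal to \<open>p - xd\<close>,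
  which lies in the common null space by the tangential cone condition; so \<open>p - xd \<perp> p - xd\<close>.\<close>

lemma weak_limit_eq_min_dist_solution:
  assumes R: "R = (\<lambda>x. ereal ((norm x)\<^sup>2 / 2))"
    and xd: "F xd = y" "\<And>z. z \<in> D \<Longrightarrow> F z = y \<Longrightarrow> norm (xd - x0) \<le> norm (z - x0)"
    and ker: "\<forall>x\<in>cball x0 (2 * \<rho>). \<forall>v. blinfun_apply (Lop xd) v = 0 \<longrightarrow> blinfun_apply (Lop x) v = 0"
    and weak: "weakly_conv (\<lambda>l. x_stop (kl l)) p" and "F p = y" and "norm (p - xb) \<le> \<rho>"
  shows "p = xd"
proof -
  note xd_in = min_dist_solution_in_cball(2)[OF xd(2)]
  have null: "blinfun_apply (Lop xd) (p - xd) = 0"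
    using run0.tcc[OF cball_if_near_xb[OF \<open>norm (p - xb) \<le> \<rho>\<close>] xd_in] \<open>F p = y\<close> xd(1) by simp
  then have "inner (x_stop (kl l) - x0) (p - xd) = 0" for l
    using x_stop_orthogonal_common_kernel[OF R] ker by blast
  then have "inner (p - x0) (p - xd) = 0" by (rule weakly_conv_orthogonal[OF weak])
  moreover have "inner (xd - x0) (p - xd) = 0"
    by (rule min_dist_solution_orthogonal_kernel[OF xd null])
  ultimately have "inner (p - xd) (p - xd) = 0" by (simp add: inner_diff_left)
  then show ?thesis by simp
qed

lemma weakly_conv_to_min_dist_solution:
  assumes "R = (\<lambda>x. ereal ((norm x)\<^sup>2 / 2))"
    and "F xd = y" "\<And>z. z \<in> D \<Longrightarrow> F z = y \<Longrightarrow> norm (xd - x0) \<le> norm (z - x0)"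
    and "\<forall>x\<in>cball x0 (2 * \<rho>). \<forall>v. blinfun_apply (Lop xd) v = 0 \<longrightarrow> blinfun_apply (Lop x) v = 0"
  shows "weakly_conv x_stop xd"
proof (rule weakly_conv_if_subseqs_have_weakly_conv_subseq)
  fix q :: "nat \<Rightarrow> nat" assume "strict_mono q"
  then obtain s p where "strict_mono s" "weakly_conv (\<lambda>l. x_stop (q (s l))) p" "F p = y"
    "norm (p - xb) \<le> \<rho>"
    using subseq_weakly_conv_to_solution by blast
  moreover from this have "p = xd"
    using weak_limit_eq_min_dist_solution[OF assms, of "\<lambda>l. q (s l)"] by blast
  ultimately show "\<exists>s. strict_mono s \<and> weakly_conv (\<lambda>l. x_stop (q (s l))) xd" by blast
qed

end

theorem mainTheorem4:
  fixes R :: "'a::{real_inner, complete_space} \<Rightarrow> ereal"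
    and F :: "'a \<Rightarrow> 'b::{real_inner, complete_space}"
    and D :: "'a set"
    and Lop :: "'a \<Rightarrow> ('a \<Rightarrow>\<^sub>L 'b)"
    and y :: 'b and x0 \<xi>0 :: 'a
    and \<sigma> \<rho> \<eta> Lc \<tau> \<mu>0 \<mu>1 :: real and \<beta> :: ereal and adaptive :: bool
    and \<delta> :: "nat \<Rightarrow> real" and yd :: "nat \<Rightarrow> 'b"
  assumes R_proper: "proper_fun R"
    and R_lsc: "lsc_fun R"
    and sigma_pos: "\<sigma> > 0"
    and R_sconv: "strongly_convex R \<sigma>"
    and rho_pos: "\<rho> > 0"
    and xi0: "\<xi>0 \<in> subdiff R x0"
    and ball_dom: "cball x0 (2 * \<rho>) \<subseteq> D"
    and sol_exists: "\<exists>xb\<in>D. F xb = y \<and> bregman R \<xi>0 xb x0 \<le> ereal (\<sigma> * \<rho>\<^sup>2)"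
    and F_weakly_closed: "\<And>xs x v. (\<forall>n. xs n \<in> D) \<Longrightarrow> weakly_conv xs x \<Longrightarrow>
                          (\<lambda>n. F (xs n)) \<longlonglongrightarrow> v \<Longrightarrow> x \<in> D \<and> F x = v"
    and L_cont: "continuous_on (cball x0 (2 * \<rho>)) Lop"
    and eta: "0 \<le> \<eta>" "\<eta> < 1"
    and tcc: "\<And>x xb. x \<in> cball x0 (2 * \<rho>) \<Longrightarrow> xb \<in> cball x0 (2 * \<rho>) \<Longrightarrow>
               norm (F x - F xb - blinfun_apply (Lop xb) (x - xb)) \<le> \<eta> * norm (F x - F xb)"
    and Lc_pos: "Lc > 0"
    and L_bound: "\<And>x. x \<in> cball x0 (2 * \<rho>) \<Longrightarrow> norm (Lop x) \<le> Lc"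
    and tau: "\<tau> > 1"
    and beta_pos: "\<beta> > 0"
    and mu0: "\<mu>0 > 0" and mu1: "\<mu>1 > 0"
    and param: "1 - (1 + \<eta>) / \<tau> - \<eta> - \<mu>0 / (4 * \<sigma>) > 0"
    and delta_pos: "\<And>k. \<delta> k > 0"
    and delta_lim: "\<delta> \<longlonglongrightarrow> 0"
    and noise: "\<And>k. norm (yd k - y) \<le> \<delta> k"
  shows
    "(\<exists>kl xs. strict_mono kl \<and> xs \<in> D \<and> F xs = y \<and> xs \<in> cball x0 (2 * \<rho>) \<and>
        weakly_conv (\<lambda>l. alg1_x R F Lop \<sigma> \<eta> Lc adaptive \<mu>0 \<mu>1 \<beta> \<xi>0 (yd (kl l)) (\<delta> (kl l))
                           (alg1_stop R F Lop \<sigma> \<eta> Lc adaptive \<mu>0 \<mu>1 \<beta> \<xi>0 (yd (kl l)) (\<delta> (kl l)) \<tau>)) xs)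
     \<and> ((R = (\<lambda>x. ereal ((norm x)\<^sup>2 / 2))) \<longrightarrow>
        (\<forall>xd. xd \<in> D \<and> F xd = y \<and> (\<forall>z\<in>D. F z = y \<longrightarrow> norm (xd - x0) \<le> norm (z - x0)) \<longrightarrow>
           (\<forall>x\<in>cball x0 (2 * \<rho>). \<forall>v. blinfun_apply (Lop xd) v = 0 \<longrightarrow> blinfun_apply (Lop x) v = 0) \<longrightarrow>
           weakly_conv (\<lambda>k. alg1_x R F Lop \<sigma> \<eta> Lc adaptive \<mu>0 \<mu>1 \<beta> \<xi>0 (yd k) (\<delta> k)
                           (alg1_stop R F Lop \<sigma> \<eta> Lc adaptive \<mu>0 \<mu>1 \<beta> \<xi>0 (yd k) (\<delta> k) \<tau>)) xd))"
proof -
  obtain xb where "F xb = y" "bregman R \<xi>0 xb x0 \<le> ereal (\<sigma> * \<rho>\<^sup>2)"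
    using sol_exists by blast
  have "alg1_run R \<sigma> x0 \<xi>0 F Lop \<eta> Lc \<mu>0 \<mu>1 \<beta> \<rho> xb y (yd k) (\<delta> k) \<tau>" for k
    unfolding alg1_run_def alg1_run_axioms_def strongly_convex_functional_def
    using assms \<open>F xb = y\<close> \<open>bregman R \<xi>0 xb x0 \<le> _\<close> by simp
  then interpret alg1_noisy_runs R \<sigma> x0 \<xi>0 F Lop \<eta> Lc adaptive \<mu>0 \<mu>1 \<beta> \<rho> xb y yd \<delta> \<tau> D
    using ball_dom F_weakly_closed delta_lim by (rule alg1_noisy_runs.intro)
  show ?thesis
    using ex_subseq_weakly_conv_to_solution weakly_conv_to_min_dist_solution
    unfolding x_stop_def[abs_def] by blast
qed

end
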